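(* Let $\mathcal P$ be finite and, for each $p\in\mathcal P$, let $f_p:\mathbb R^n\to\mathbb R^n$ be continuously differentiable with $\dot x=f_p(x)$ forward complete. Let $\sigma$ be a switching signal, $K\subset\mathbb R^n$ compact with nonempty interior, $|\cdot|$ a norm on $\mathbb R^n$ and $\mu$ the matrix measure of its induced matrix norm. Then for all $x,\bar x\in K$ and all $t\ge0$, $$e^{\underline\eta_\sigma(t)}|\bar x-x|\le|\xi_\sigma(t,\bar x)-\xi_\sigma(t,x)|\le e^{\overline\eta_\sigma^{\mathrm{alt}}(t)}|\bar x-x|,$$ where $$\underline\eta_\sigma(t):=\sum_{p\in\mathcal P}\int_0^t\Big(\min_{v\in\mathrm{co}(\xi_\sigma(s,K))}-\mu(-J_xf_p(v))\Big)\mathbf 1[\sigma(s)=p]\,ds,$$ $$\overline\eta_\sigma^{\mathrm{alt}}(t):=\sum_{p\in\mathcal P}\int_0^t\Big(\max_{v\in\mathrm{co}(\xi_\sigma(s,K))}\mu(J_xf_p(v))\Big)\mathbf 1[\sigma(s)=p]\,ds.$$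
   Context: A switching signal is a right-continuous piecewise-constant $\sigma:\mathbb R_{\ge0}\to\mathcal P$ with finitely many switches in every bounded interval; $\xi_\sigma(t,x)$ is the solution of $\dot x=f_\sigma(x)$ at time $t$ from $x$ at time $0$; $\xi_\sigma(t,K):=\{\xi_\sigma(t,x):x\in K\}$; $\mathrm{co}$ convex hull; $J_xf_p$ Jacobian. Matrix measure $\mu(A):=\lim_{t\searrow0}(\|I+tA\|-1)/t$. *)

theory Defs
  imports "HOL-Analysis.Analysis"
begin

definition is_norm :: "(real^'n \<Rightarrow> real) \<Rightarrow> bool" where
  "is_norm N \<longleftrightarrow> (\<forall>x. N x = 0 \<longleftrightarrow> x = 0) \<and> (\<forall>x y. N (x + y) \<le> N x + N y)
     \<and> (\<forall>c x. N (c *\<^sub>R x) = \<bar>c\<bar> * N x)"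

definition induced_norm :: "(real^'n \<Rightarrow> real) \<Rightarrow> real^'n^'n \<Rightarrow> real" where
  "induced_norm N A = (SUP x\<in>{x. N x = 1}. N (A *v x))"

definition matrix_measure :: "(real^'n \<Rightarrow> real) \<Rightarrow> real^'n^'n \<Rightarrow> real" where
  "matrix_measure N A = Lim (at_right 0) (\<lambda>t. (induced_norm N (mat 1 + t *\<^sub>R A) - 1) / t)"

definition jacobian :: "(real^'n \<Rightarrow> real^'n) \<Rightarrow> real^'n \<Rightarrow> real^'n^'n" where
  "jacobian f v = matrix (frechet_derivative f (at v))"

definition continuously_differentiable :: "(real^'n \<Rightarrow> real^'n) \<Rightarrow> bool" where
  "continuously_differentiable g \<longleftrightarrow>
     (\<exists>g'. (\<forall>x. (g has_derivative blinfun_apply (g' x)) (at x)) \<and> continuous_on UNIV g')"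

definition forward_complete :: "(real^'n \<Rightarrow> real^'n) \<Rightarrow> bool" where
  "forward_complete g \<longleftrightarrow> (\<forall>x. \<exists>\<xi>. \<xi> 0 = x \<and>
     (\<forall>t\<ge>0. (\<xi> has_vector_derivative g (\<xi> t)) (at t within {0..})))"

text \<open>Right-continuous piecewise constant signal on [0,infinity) with finitely many
  switches on every bounded interval: on [0,T), sigma(t) equals its value at the
  last switching time s <= t from a finite set S containing 0.\<close>
definition switching_signal :: "(real \<Rightarrow> 'p) \<Rightarrow> bool" where
  "switching_signal \<sigma> \<longleftrightarrow> (\<forall>T>0. \<exists>S. finite S \<and> 0 \<in> S \<and>
     (\<forall>t\<in>{0..<T}. \<sigma> t = \<sigma> (Max {s\<in>S. s \<le> t})))"

definition switched_sol ::
  "('p \<Rightarrow> real^'n \<Rightarrow> real^'n) \<Rightarrow> (real \<Rightarrow> 'p) \<Rightarrow> real^'n \<Rightarrow> (real \<Rightarrow> real^'n) \<Rightarrow> bool" where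
  "switched_sol f \<sigma> x \<xi> \<longleftrightarrow> \<xi> 0 = x \<and> continuous_on {0..} \<xi> \<and>
     (\<forall>t\<ge>0. (\<xi> has_vector_derivative f (\<sigma> t) (\<xi> t)) (at t within {t..}))"

definition switched_flow ::
  "('p \<Rightarrow> real^'n \<Rightarrow> real^'n) \<Rightarrow> (real \<Rightarrow> 'p) \<Rightarrow> real \<Rightarrow> real^'n \<Rightarrow> real^'n" where
  "switched_flow f \<sigma> t x = (THE y. \<exists>\<xi>. switched_sol f \<sigma> x \<xi> \<and> \<xi> t = y)"

definition eta_lower ::
  "('p::finite \<Rightarrow> real^'n \<Rightarrow> real^'n) \<Rightarrow> (real \<Rightarrow> 'p) \<Rightarrow> (real^'n) set \<Rightarrow> (real^'n \<Rightarrow> real) \<Rightarrow> real \<Rightarrow> real" where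
  "eta_lower f \<sigma> K N t = (\<Sum>p\<in>UNIV. integral {0..t} (\<lambda>s.
     (INF v\<in>convex hull (switched_flow f \<sigma> s ` K). - matrix_measure N (- jacobian (f p) v))
     * (if \<sigma> s = p then 1 else 0)))"

definition eta_upper_alt ::
  "('p::finite \<Rightarrow> real^'n \<Rightarrow> real^'n) \<Rightarrow> (real \<Rightarrow> 'p) \<Rightarrow> (real^'n) set \<Rightarrow> (real^'n \<Rightarrow> real) \<Rightarrow> real \<Rightarrow> real" where
  "eta_upper_alt f \<sigma> K N t = (\<Sum>p\<in>UNIV. integral {0..t} (\<lambda>s.
     (SUP v\<in>convex hull (switched_flow f \<sigma> s ` K). matrix_measure N (jacobian (f p) v))
     * (if \<sigma> s = p then 1 else 0)))"

end

theory Submission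
  imports Defs
begin

text \<open>Let \<open>u(t)\<close> be the \<open>N\<close>-distance of the trajectories through \<open>x\<close> and \<open>x\<^sub>b\<close>. At each time
  the difference of the active vector field at the two points is, up to an arbitrarily small
  error, \<open>A (x\<^sub>b - x)\<close> for a mean \<open>A\<close> of Jacobians along the segment joining them. This segment
  lies in the convex hull of \<open>\<xi>\<^sub>\<sigma>(t, K)\<close>, and the matrix measure is subadditive, so \<open>\<mu>(A)\<close> is
  bounded by the supremum of \<open>\<mu>(J f\<^sub>p)\<close> over the hull. Since
  \<open>\<parallel>I + h A\<parallel> \<le> 1 + h (\<mu>(A) + o(1))\<close>, the upper right Dini derivative of \<open>u\<close> is at most that
  supremum times \<open>u\<close>; dually, \<open>x = (I - h A)(I + h A) x + h\<^sup>2 A\<^sup>2 x\<close> gives the lower rate with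
  \<open>\<mu>(-A)\<close>. A Gronwall lemma for right Dini derivatives integrates these rates, one mode at a time
  because \<open>\<sigma>\<close> is only piecewise constant.\<close>

section \<open>Norms and matrix measures\<close>

definition measure_quotient :: "(real^'n \<Rightarrow> real) \<Rightarrow> real^'n^'n \<Rightarrow> real \<Rightarrow> real" where
  "measure_quotient N A h = (induced_norm N (mat 1 + h *\<^sub>R A) - 1) / h"

locale vector_norm =
  fixes N :: "real^'n \<Rightarrow> real"
  assumes is_norm: "is_norm N"
begin

lemma zero_iff: "N x = 0 \<longleftrightarrow> x = 0"
  using is_norm unfolding is_norm_def by blast

lemma triangle: "N (x + y) \<le> N x + N y"
  using is_norm unfolding is_norm_def by blast

lemma homogeneous: "N (c *\<^sub>R x) = \<bar>c\<bar> * N x"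
  using is_norm unfolding is_norm_def by blast

lemma zero [simp]: "N 0 = 0"
  by (simp add: zero_iff)

lemma minus: "N (- x) = N x"
  using homogeneous[of "-1" x] by simp

lemma nonneg: "0 \<le> N x"
  using triangle[of x "- x"] by (simp add: minus)

lemma pos: "x \<noteq> 0 \<Longrightarrow> 0 < N x"
  using nonneg[of x] zero_iff[of x] by linarith

lemma minus_commute: "N (x - y) = N (y - x)"
  using minus[of "x - y"] by simp

lemma triangle_diff: "N (x - y) \<le> N x + N y"
  using triangle[of x "- y"] by (simp add: minus)

lemma abs_diff_le: "\<bar>N x - N y\<bar> \<le> N (x - y)"
  using triangle[of "x - y" y] triangle[of "y - x" x] minus_commute[of x y] by simp

lemma sum_le: "N (sum g A) \<le> (\<Sum>i\<in>A. N (g i))"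
  by (induction A rule: infinite_finite_induct) (auto intro: order_trans[OF triangle])

lemma le_norm: "\<exists>C>0. \<forall>x. N x \<le> C * norm x"
proof -
  define C where "C = (\<Sum>i\<in>UNIV. N (axis i (1::real))) + 1"
  have "C > 0"
    unfolding C_def using nonneg by (simp add: add_nonneg_pos sum_nonneg)
  moreover have "N x \<le> C * norm x" for x
  proof -
    have "N x = N (\<Sum>i\<in>UNIV. x $ i *\<^sub>R axis i 1)"
      by (simp add: basis_expansion scalar_mult_eq_scaleR[symmetric])
    also have "\<dots> \<le> (\<Sum>i\<in>UNIV. \<bar>x $ i\<bar> * N (axis i 1))"
      using sum_le[of "\<lambda>i. x $ i *\<^sub>R axis i 1" UNIV] by (simp add: homogeneous)
    also have "\<dots> \<le> (\<Sum>i\<in>UNIV. norm x * N (axis i 1))"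
      by (intro sum_mono mult_right_mono nonneg component_le_norm_cart)
    also have "\<dots> \<le> C * norm x"
      unfolding C_def by (simp add: sum_distrib_left[symmetric] algebra_simps)
    finally show ?thesis .
  qed
  ultimately show ?thesis by blast
qed

lemma continuous_on_UNIV: "continuous_on UNIV N"
proof -
  obtain C where "C > 0" "\<And>x. N x \<le> C * norm x"
    using le_norm by blast
  then have "C-lipschitz_on UNIV N"
    by (intro lipschitz_onI) (auto simp: dist_norm dist_real_def intro: order_trans[OF abs_diff_le])
  then show ?thesis
    by (rule lipschitz_on_continuous_on)
qed

lemma norm_le: "\<exists>c>0. \<forall>x. c * norm x \<le> N x"
proof -
  obtain i :: 'n where True by blast
  then have "sphere (0::real^'n) 1 \<noteq> {}"
    using norm_axis_1[of i] by (metis empty_iff mem_sphere_0)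
  then obtain x0 where x0: "x0 \<in> sphere 0 1" "\<And>y. y \<in> sphere 0 1 \<Longrightarrow> N x0 \<le> N y"
    using continuous_attains_inf[OF compact_sphere _ continuous_on_subset[OF continuous_on_UNIV]]
    by blast
  have "N x0 * norm x \<le> N x" for x
  proof (cases "x = 0")
    case False
    then have "N x0 \<le> N ((1 / norm x) *\<^sub>R x)"
      by (intro x0(2)) simp
    then show ?thesis
      using False by (simp add: homogeneous field_simps)
  qed simp
  moreover have "N x0 > 0"
    using x0(1) by (intro pos) auto
  ultimately show ?thesis by blast
qed

lemma exists_unit: "\<exists>z. N z = 1"
proof -
  obtain i :: 'n where True by blast
  then have "N (axis i 1) > 0"
    by (intro pos) (simp add: axis_eq_0_iff)
  then have "N ((1 / N (axis i 1)) *\<^sub>R axis i 1) = 1"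
    by (simp add: homogeneous)
  then show ?thesis by blast
qed

lemma bdd_above_induced_norm: "bdd_above ((\<lambda>z. N (A *v z)) ` {z. N z = 1})"
proof -
  obtain C where C: "C > 0" "\<And>x. N x \<le> C * norm x"
    using le_norm by blast
  obtain c where c: "c > 0" "\<And>x. c * norm x \<le> N x"
    using norm_le by blast
  obtain K where K: "K > 0" "\<And>z. norm (A *v z) \<le> norm z * K"
    using bounded_linear.pos_bounded[OF matrix_vector_mul_bounded_linear] by blast
  have "N (A *v z) \<le> C * (K / c)" if "N z = 1" for z
  proof -
    have "N (A *v z) \<le> C * (norm z * K)"
      using C(2)[of "A *v z"] K(2)[of z] C(1) by (meson mult_left_mono less_imp_le order_trans)
    also have "norm z * K \<le> K / c"
      using c(2)[of z] that c(1) K(1) by (simp add: field_simps)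
    finally show ?thesis
      using C(1) by (simp add: mult_left_mono)
  qed
  then show ?thesis
    by (intro bdd_aboveI2) auto
qed

lemma induced_norm_mult_le: "N (A *v z) \<le> induced_norm N A * N z"
proof (cases "z = 0")
  case False
  then have z: "N z > 0"
    by (rule pos)
  have "N (A *v ((1 / N z) *\<^sub>R z)) \<le> induced_norm N A"
    unfolding induced_norm_def using z
    by (intro cSUP_upper bdd_above_induced_norm) (simp add: homogeneous)
  moreover have "N (A *v ((1 / N z) *\<^sub>R z)) = N (A *v z) / N z"
    using z by (simp add: matrix_scaleR_vector_ac scaleR_matrix_vector_assoc[symmetric] homogeneous)
  ultimately show ?thesis
    using z by (simp add: field_simps)
qed simp

lemma induced_norm_le:
  assumes "\<And>z. N (A *v z) \<le> M * N z"
  shows "induced_norm N A \<le> M"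
  unfolding induced_norm_def
proof (rule cSUP_least)
  show "{z. N z = 1} \<noteq> {}"
    using exists_unit by blast
  show "N (A *v z) \<le> M" if "z \<in> {z. N z = 1}" for z
    using assms[of z] that by simp
qed

lemma induced_norm_add_le: "induced_norm N (A + B) \<le> induced_norm N A + induced_norm N B"
proof (rule induced_norm_le)
  fix z
  have "N ((A + B) *v z) \<le> N (A *v z) + N (B *v z)"
    unfolding matrix_vector_mult_add_rdistrib by (rule triangle)
  also have "\<dots> \<le> (induced_norm N A + induced_norm N B) * N z"
    using induced_norm_mult_le[of A z] induced_norm_mult_le[of B z] by (simp add: algebra_simps)
  finally show "N ((A + B) *v z) \<le> (induced_norm N A + induced_norm N B) * N z" .
qed

lemma induced_norm_scaleR_le: "induced_norm N (c *\<^sub>R A) \<le> \<bar>c\<bar> * induced_norm N A"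
  by (rule induced_norm_le)
    (simp add: scaleR_matrix_vector_assoc[symmetric] homogeneous mult.assoc mult_left_mono
      induced_norm_mult_le)

lemma induced_norm_sum_le: "induced_norm N (sum A I) \<le> (\<Sum>i\<in>I. induced_norm N (A i))"
proof (induction I rule: infinite_finite_induct)
  case (insert i I)
  then show ?case
    using induced_norm_add_le[of "A i" "sum A I"] by simp
qed (auto intro: induced_norm_le)

lemma induced_norm_id [simp]: "induced_norm N (mat 1) = 1"
proof -
  obtain z where "N z = 1"
    using exists_unit by blast
  then show ?thesis
    using induced_norm_mult_le[of "mat 1" z] induced_norm_le[of "mat 1" 1] by simp
qed

lemma induced_norm_le_blinfun:
  "\<exists>C>0. \<forall>A X. (\<forall>z. A *v z = blinfun_apply X z) \<longrightarrow> induced_norm N A \<le> C * norm X"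
proof -
  obtain C where C: "C > 0" "\<And>x. N x \<le> C * norm x"
    using le_norm by blast
  obtain c where c: "c > 0" "\<And>x. c * norm x \<le> N x"
    using norm_le by blast
  have "induced_norm N A \<le> C / c * norm X" if AX: "\<forall>z. A *v z = blinfun_apply X z" for A X
  proof (rule induced_norm_le)
    fix z
    have "N (A *v z) \<le> C * (norm X * norm z)"
      using C(2)[of "A *v z"] C(1) norm_blinfun[of X z] AX
      by (simp add: order_trans[OF _ mult_left_mono])
    also have "\<dots> \<le> C * (norm X * (N z / c))"
      using c C(1) by (intro mult_left_mono) (auto simp: field_simps mult.commute)
    finally show "N (A *v z) \<le> C / c * norm X * N z"
      by (simp add: field_simps)
  qed
  then show ?thesis
    using C(1) c(1) by (intro exI[of _ "C / c"]) auto
qed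

text \<open>The quotient is monotone because \<open>h \<mapsto> induced_norm N (mat 1 + h *\<^sub>R A)\<close> is convex
  and takes the value 1 at 0, so the limit defining the matrix measure is an infimum.\<close>
lemma measure_quotient_mono:
  assumes "0 < h1" "h1 \<le> h2"
  shows "measure_quotient N A h1 \<le> measure_quotient N A h2"
proof -
  define \<theta> where "\<theta> = h1 / h2"
  have \<theta>: "0 < \<theta>" "\<theta> \<le> 1"
    using assms unfolding \<theta>_def by auto
  have "mat 1 + h1 *\<^sub>R A = (1 - \<theta>) *\<^sub>R mat 1 + \<theta> *\<^sub>R (mat 1 + h2 *\<^sub>R A)"
    using assms unfolding \<theta>_def by (simp add: algebra_simps)
  then have "induced_norm N (mat 1 + h1 *\<^sub>R A) \<le> (1 - \<theta>) + \<theta> * induced_norm N (mat 1 + h2 *\<^sub>R A)"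
    using induced_norm_add_le[of "(1 - \<theta>) *\<^sub>R mat 1" "\<theta> *\<^sub>R (mat 1 + h2 *\<^sub>R A)"]
      induced_norm_scaleR_le[of "1 - \<theta>" "mat 1"] induced_norm_scaleR_le[of \<theta> "mat 1 + h2 *\<^sub>R A"] \<theta>
    by simp
  then have "induced_norm N (mat 1 + h1 *\<^sub>R A) - 1 \<le> \<theta> * (induced_norm N (mat 1 + h2 *\<^sub>R A) - 1)"
    by (simp add: algebra_simps)
  then show ?thesis
    using assms unfolding measure_quotient_def \<theta>_def by (simp add: field_simps)
qed

lemma measure_quotient_ge: "0 < h \<Longrightarrow> - induced_norm N A \<le> measure_quotient N A h"
  using induced_norm_add_le[of "mat 1 + h *\<^sub>R A" "- (h *\<^sub>R A)"] induced_norm_scaleR_le[of "- h" A]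
  unfolding measure_quotient_def by (simp add: field_simps)

lemma tendsto_matrix_measure: "(measure_quotient N A \<longlongrightarrow> matrix_measure N A) (at_right 0)"
proof -
  let ?q = "measure_quotient N A"
  have bdd: "bdd_below (?q ` {0<..})"
    using measure_quotient_ge by (intro bdd_belowI2) auto
  have "(?q \<longlongrightarrow> Inf (?q ` {0<..})) (at_right 0)"
  proof (rule order_tendstoI)
    fix a assume "a < Inf (?q ` {0<..})"
    then show "eventually (\<lambda>h. a < ?q h) (at_right 0)"
      using cInf_lower[OF _ bdd] unfolding eventually_at_right_field
      by (intro exI[of _ 1]) (auto intro: less_le_trans)
  next
    fix a assume "Inf (?q ` {0<..}) < a"
    then obtain h0 where "h0 > 0" "?q h0 < a"
      using cInf_lessD[of "?q ` {0<..}" a] by auto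
    then show "eventually (\<lambda>h. ?q h < a) (at_right 0)"
      unfolding eventually_at_right_field
      by (intro exI[of _ h0]) (auto dest: measure_quotient_mono[of _ h0 A])
  qed
  moreover have "matrix_measure N A = Lim (at_right 0) ?q"
    unfolding matrix_measure_def measure_quotient_def[abs_def] ..
  ultimately show ?thesis
    using tendsto_Lim[OF trivial_limit_at_right_real] by metis
qed

lemma matrix_measure_le_add: "matrix_measure N A \<le> matrix_measure N B + induced_norm N (A - B)"
proof (rule tendsto_le[OF trivial_limit_at_right_real
      tendsto_add[OF tendsto_matrix_measure tendsto_const] tendsto_matrix_measure])
  have "measure_quotient N A h \<le> measure_quotient N B h + induced_norm N (A - B)" if "h > 0" for h
    using induced_norm_add_le[of "mat 1 + h *\<^sub>R B" "h *\<^sub>R (A - B)"]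
      induced_norm_scaleR_le[of h "A - B"] that
    unfolding measure_quotient_def by (simp add: algebra_simps field_simps)
  then show "eventually (\<lambda>h. measure_quotient N A h \<le> measure_quotient N B h + induced_norm N (A - B))
      (at_right 0)"
    by (auto simp: eventually_at_right_field intro: exI[of _ 1])
qed

lemma matrix_measure_mean_le:
  assumes "finite I" "I \<noteq> {}"
  shows "matrix_measure N ((1 / card I) *\<^sub>R (\<Sum>i\<in>I. A i))
    \<le> (1 / card I) * (\<Sum>i\<in>I. matrix_measure N (A i))"
proof (rule tendsto_le[OF trivial_limit_at_right_real _ tendsto_matrix_measure])
  show "((\<lambda>h. (1 / card I) * (\<Sum>i\<in>I. measure_quotient N (A i) h)) \<longlongrightarrow>
      (1 / card I) * (\<Sum>i\<in>I. matrix_measure N (A i))) (at_right 0)"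
    by (intro tendsto_intros tendsto_matrix_measure)
  have card: "card I > 0"
    using assms by (simp add: card_gt_0_iff)
  have "measure_quotient N ((1 / card I) *\<^sub>R (\<Sum>i\<in>I. A i)) h
      \<le> (1 / card I) * (\<Sum>i\<in>I. measure_quotient N (A i) h)" if h: "h > 0" for h
  proof -
    have "induced_norm N (mat 1 + h *\<^sub>R ((1 / card I) *\<^sub>R (\<Sum>i\<in>I. A i)))
        = induced_norm N ((1 / card I) *\<^sub>R (\<Sum>i\<in>I. mat 1 + h *\<^sub>R A i))"
    proof -
      have "(\<Sum>i\<in>I. mat 1 + h *\<^sub>R A i) = real (card I) *\<^sub>R mat 1 + h *\<^sub>R (\<Sum>i\<in>I. A i)"
        by (simp only: sum.distrib scaleR_sum_right sum_constant_scaleR)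
      then show ?thesis
        using card by (simp add: algebra_simps)
    qed
    also have "\<dots> \<le> (1 / card I) * induced_norm N (\<Sum>i\<in>I. mat 1 + h *\<^sub>R A i)"
      using induced_norm_scaleR_le[of "1 / card I"] by simp
    also have "\<dots> \<le> (1 / card I) * (\<Sum>i\<in>I. induced_norm N (mat 1 + h *\<^sub>R A i))"
      by (intro mult_left_mono induced_norm_sum_le) simp
    finally have "induced_norm N (mat 1 + h *\<^sub>R ((1 / card I) *\<^sub>R (\<Sum>i\<in>I. A i)))
        \<le> (1 / card I) * (\<Sum>i\<in>I. induced_norm N (mat 1 + h *\<^sub>R A i))" .
    then show ?thesis
      using card h unfolding measure_quotient_def
      by (simp add: sum_divide_distrib[symmetric] sum_subtractf field_simps)
  qed
  then show "eventually (\<lambda>h. measure_quotient N ((1 / card I) *\<^sub>R (\<Sum>i\<in>I. A i)) h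
      \<le> (1 / card I) * (\<Sum>i\<in>I. measure_quotient N (A i) h)) (at_right 0)"
    by (auto simp: eventually_at_right_field intro: exI[of _ 1])
qed

lemma eventually_induced_norm_le:
  assumes "\<epsilon> > 0"
  shows "eventually (\<lambda>h. induced_norm N (mat 1 + h *\<^sub>R A) \<le> 1 + h * (matrix_measure N A + \<epsilon>))
    (at_right 0)"
proof -
  have "eventually (\<lambda>h. measure_quotient N A h < matrix_measure N A + \<epsilon>) (at_right 0)"
    using assms by (intro order_tendstoD(2)[OF tendsto_matrix_measure]) simp
  with eventually_at_right_less[of 0] show ?thesis
    by eventually_elim (auto simp: measure_quotient_def field_simps)
qed

lemma eventually_norm_step_le:
  assumes "\<epsilon> > 0"
  shows "eventually (\<lambda>h. N (x + h *\<^sub>R (A *v x)) \<le> N x + h * (matrix_measure N A * N x + \<epsilon>))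
    (at_right 0)"
proof -
  define \<epsilon>' where "\<epsilon>' = \<epsilon> / (N x + 1)"
  have \<epsilon>': "\<epsilon>' > 0" "\<epsilon>' * N x \<le> \<epsilon>"
    using assms nonneg[of x] unfolding \<epsilon>'_def by (auto simp: field_simps)
  show ?thesis
    using eventually_induced_norm_le[OF \<epsilon>'(1), of A] eventually_at_right_less[of 0]
  proof eventually_elim
    case (elim h)
    have "N (x + h *\<^sub>R (A *v x)) = N ((mat 1 + h *\<^sub>R A) *v x)"
      by (simp add: matrix_vector_mult_add_rdistrib scaleR_matrix_vector_assoc)
    also have "\<dots> \<le> (1 + h * (matrix_measure N A + \<epsilon>')) * N x"
      using elim(1) by (intro order_trans[OF induced_norm_mult_le] mult_right_mono nonneg)
    also have "\<dots> \<le> N x + h * (matrix_measure N A * N x + \<epsilon>)"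
      using elim(2) \<epsilon>'(2) mult_left_mono[of "\<epsilon>' * N x" \<epsilon> h] by (simp add: algebra_simps)
    finally show ?case .
  qed
qed

text \<open>With \<open>y = x + h A x\<close> one has \<open>x = (I - h A) y + h\<^sup>2 A\<^sup>2 x\<close>, so a bound on the
  norm of \<open>I - h A\<close> controls \<open>N x\<close> by \<open>N y\<close> up to terms of second order.\<close>
lemma norm_step_lower_bound:
  assumes "h \<ge> 0" and IN: "induced_norm N (mat 1 + h *\<^sub>R (- A)) \<le> 1 + h * m"
  shows "N x \<le> N (x + h *\<^sub>R (A *v x)) + h * m * N x
    + h * (h * (\<bar>m\<bar> * N (A *v x) + N (A *v (A *v x))))"
proof -
  define y where "y = x + h *\<^sub>R (A *v x)"
  have "x = (mat 1 + h *\<^sub>R (- A)) *v y + (h * h) *\<^sub>R (A *v (A *v x))"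
    unfolding y_def
    by (simp add: matrix_vector_mult_add_rdistrib matrix_vector_right_distrib
        scaleR_matrix_vector_assoc[symmetric] matrix_scaleR_vector_ac algebra_simps)
  then have "N x \<le> N ((mat 1 + h *\<^sub>R (- A)) *v y) + N ((h * h) *\<^sub>R (A *v (A *v x)))"
    by (metis triangle)
  also have "\<dots> \<le> (1 + h * m) * N y + h * h * N (A *v (A *v x))"
    using IN nonneg[of y] order_trans[OF induced_norm_mult_le mult_right_mono] \<open>h \<ge> 0\<close>
    by (simp add: homogeneous)
  finally have "N x \<le> N y + h * m * N y + h * h * N (A *v (A *v x))"
    by (simp add: algebra_simps)
  moreover have "m * (N y - N x) \<le> \<bar>m\<bar> * (h * N (A *v x))"
  proof -
    have "m * (N y - N x) \<le> \<bar>m\<bar> * \<bar>N y - N x\<bar>"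
      by (simp add: abs_mult[symmetric])
    also have "\<bar>N y - N x\<bar> \<le> h * N (A *v x)"
      using abs_diff_le[of y x] \<open>h \<ge> 0\<close> unfolding y_def by (simp add: homogeneous)
    finally show ?thesis
      by (simp add: mult_left_mono)
  qed
  then have "h * (m * (N y - N x)) \<le> h * (\<bar>m\<bar> * (h * N (A *v x)))"
    using \<open>h \<ge> 0\<close> by (rule mult_left_mono)
  then have "h * m * N y \<le> h * m * N x + h * (\<bar>m\<bar> * (h * N (A *v x)))"
    by (simp add: algebra_simps)
  ultimately have "N x \<le> N y + h * m * N x + h * (\<bar>m\<bar> * (h * N (A *v x))) + h * h * N (A *v (A *v x))"
    by linarith
  then show ?thesis
    unfolding y_def by (simp add: algebra_simps)
qed

lemma eventually_norm_step_ge: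
  assumes "\<epsilon> > 0"
  shows "eventually (\<lambda>h. N x - h * (matrix_measure N (- A) * N x + \<epsilon>) \<le> N (x + h *\<^sub>R (A *v x)))
    (at_right 0)"
proof -
  define \<epsilon>' where "\<epsilon>' = \<epsilon> / 2 / (N x + 1)"
  have \<epsilon>': "\<epsilon>' > 0" "\<epsilon>' * N x \<le> \<epsilon> / 2"
    using assms nonneg[of x] unfolding \<epsilon>'_def by (auto simp: field_simps)
  define m where "m = matrix_measure N (- A) + \<epsilon>'"
  define R where "R = \<bar>m\<bar> * N (A *v x) + N (A *v (A *v x))"
  have "R \<ge> 0"
    unfolding R_def using nonneg by simp
  have "eventually (\<lambda>h. h < \<epsilon> / 2 / (R + 1)) (at_right 0)"
    using assms \<open>R \<ge> 0\<close> by (intro order_tendstoD(2)[OF tendsto_ident_at]) simp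
  then have small: "eventually (\<lambda>h. h * R \<le> \<epsilon> / 2) (at_right 0)"
    using eventually_at_right_less[of 0]
  proof eventually_elim
    case (elim h)
    then have "h * R \<le> h * (R + 1)"
      by simp
    also have "\<dots> \<le> \<epsilon> / 2"
      using elim \<open>R \<ge> 0\<close> by (simp add: field_simps)
    finally show ?case .
  qed
  show ?thesis
    using eventually_induced_norm_le[OF \<epsilon>'(1), of "- A"] small eventually_at_right_less[of 0]
  proof eventually_elim
    case (elim h)
    then have "N x \<le> N (x + h *\<^sub>R (A *v x)) + h * m * N x + h * (h * R)"
      unfolding m_def R_def by (intro norm_step_lower_bound) auto
    also have "\<dots> \<le> N (x + h *\<^sub>R (A *v x)) + h * (matrix_measure N (- A) * N x + \<epsilon>)"
      using elim(2,3) \<epsilon>'(2) mult_left_mono[of "\<epsilon>' * N x + h * R" \<epsilon> h]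
      unfolding m_def by (simp add: algebra_simps)
    finally show ?case
      by simp
  qed
qed

end

section \<open>Comparison principles for right derivatives\<close>

lemma at_within_Ici_at_right: "at t within {t..} = at_right (t::real)"
  by (rule at_within_nhd[of t UNIV]) auto

lemma has_vector_derivative_right_approx:
  fixes e :: "real \<Rightarrow> 'a::real_normed_vector"
  assumes "(e has_vector_derivative d) (at_right t)" "\<epsilon> > 0"
  shows "eventually (\<lambda>r. norm (e r - (e t + (r - t) *\<^sub>R d)) \<le> (r - t) * \<epsilon>) (at_right t)"
proof -
  have "((\<lambda>r. (1 / norm (r - t)) *\<^sub>R (e r - (e t + (r - t) *\<^sub>R d))) \<longlongrightarrow> 0) (at_right t)"
    using assms(1) unfolding has_vector_derivative_def has_derivative_within by blast
  from tendstoD[OF this assms(2)] eventually_at_right_less[of t] show ?thesis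
  proof eventually_elim
    case (elim r)
    then have "norm (e r - (e t + (r - t) *\<^sub>R d)) / (r - t) < \<epsilon>"
      by simp
    then show ?case
      using elim(2) by (simp add: field_simps)
  qed
qed

lemma continuous_on_le_at_right_endpoint:
  fixes \<phi> \<psi> :: "real \<Rightarrow> real"
  assumes "a < s" "continuous_on {a..s} \<phi>" "continuous_on {a..s} \<psi>"
    and "\<And>r. a < r \<Longrightarrow> r < s \<Longrightarrow> \<phi> r \<le> \<psi> r"
  shows "\<phi> s \<le> \<psi> s"
proof (rule tendsto_le[OF trivial_limit_at_left_real])
  show "(\<phi> \<longlongrightarrow> \<phi> s) (at_left s)" "(\<psi> \<longlongrightarrow> \<psi> s) (at_left s)"
    using assms(1-3) by (auto simp: continuous_on_Icc_at_leftD)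
  show "eventually (\<lambda>r. \<phi> r \<le> \<psi> r) (at_left s)"
    unfolding eventually_at_left_field using assms(1,4) by blast
qed

text \<open>The first point where \<open>\<phi>\<close> would rise above the line of slope \<open>\<epsilon>\<close> cannot exist: up to it
  the bound holds by continuity, and there the growth hypothesis extends it a bit further.
  The hypothesis is only required below the level \<open>\<phi> a + c\<close>, which makes the lemma usable
  for bootstrapping a priori bounds.\<close>
lemma right_growth_le_imp_le:
  fixes \<phi> :: "real \<Rightarrow> real"
  assumes ab: "a \<le> b" and cont: "continuous_on {a..b} \<phi>" and "0 \<le> \<epsilon>" "\<epsilon> * (b - a) < c"
    and growth: "\<And>t. t \<in> {a..<b} \<Longrightarrow> \<phi> t < \<phi> a + c \<Longrightarrow>
      eventually (\<lambda>r. \<phi> r \<le> \<phi> t + (r - t) * \<epsilon>) (at_right t)"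
  shows "\<phi> b \<le> \<phi> a + \<epsilon> * (b - a)"
proof (rule ccontr)
  assume nb: "\<not> \<phi> b \<le> \<phi> a + \<epsilon> * (b - a)"
  define V where "V = {s\<in>{a..b}. \<phi> s > \<phi> a + \<epsilon> * (s - a)}"
  define s0 where "s0 = Inf V"
  have bV: "b \<in> V"
    using nb ab unfolding V_def by auto
  have bdd: "bdd_below V"
    unfolding V_def by (rule bdd_belowI[of _ a]) auto
  have s0: "a \<le> s0" "s0 \<le> b"
    unfolding s0_def using bV bdd by (auto intro: cInf_greatest cInf_lower simp: V_def)
  have at_s0: "\<phi> s0 \<le> \<phi> a + \<epsilon> * (s0 - a)"
  proof (cases "s0 = a")
    case False
    then have "a < s0"
      using s0 by simp
    show ?thesis
    proof (rule continuous_on_le_at_right_endpoint[OF \<open>a < s0\<close>])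
      show "continuous_on {a..s0} \<phi>"
        using s0 by (intro continuous_on_subset[OF cont]) auto
      show "\<phi> r \<le> \<phi> a + \<epsilon> * (r - a)" if "a < r" "r < s0" for r
      proof -
        have "r \<notin> V"
          using that cInf_lower[OF _ bdd, of r] unfolding s0_def by auto
        then show ?thesis
          using that s0 unfolding V_def by auto
      qed
    qed (intro continuous_intros)
  qed simp
  then have "s0 \<notin> V" "s0 < b"
    using bV s0 unfolding V_def by (auto simp: le_less)
  moreover have "\<phi> s0 < \<phi> a + c"
    using at_s0 mult_left_mono[OF \<open>s0 \<le> b\<close> \<open>0 \<le> \<epsilon>\<close>] assms(4) by (simp add: algebra_simps)
  ultimately obtain d where d: "d > s0" "\<And>r. s0 < r \<Longrightarrow> r < d \<Longrightarrow> \<phi> r \<le> \<phi> s0 + (r - s0) * \<epsilon>"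
    using growth[of s0] s0 unfolding eventually_at_right_field by auto
  have "s0 + (d - s0) / 2 \<le> Inf V"
  proof (rule cInf_greatest)
    show "V \<noteq> {}"
      using bV by auto
    fix v assume v: "v \<in> V"
    have "s0 < v"
      using v \<open>s0 \<notin> V\<close> cInf_lower[OF v bdd] unfolding s0_def by (cases "v = Inf V") auto
    moreover have "\<not> v < d"
    proof
      assume "v < d"
      then have "\<phi> v \<le> \<phi> a + \<epsilon> * (v - a)"
        using d(2)[OF \<open>s0 < v\<close>] at_s0 by (simp add: algebra_simps)
      then show False
        using v unfolding V_def by simp
    qed
    ultimately show "s0 + (d - s0) / 2 \<le> v"
      using d(1) by (auto simp: field_simps)
  qed
  then show False
    using d(1) unfolding s0_def[symmetric] by simp
qed

lemma right_dini_nonpos_imp_le: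
  fixes \<phi> :: "real \<Rightarrow> real"
  assumes ab: "a \<le> b" and cont: "continuous_on {a..b} \<phi>" and c: "c > 0"
    and growth: "\<And>t \<epsilon>. t \<in> {a..<b} \<Longrightarrow> \<phi> t < \<phi> a + c \<Longrightarrow> \<epsilon> > 0 \<Longrightarrow>
      eventually (\<lambda>r. \<phi> r \<le> \<phi> t + (r - t) * \<epsilon>) (at_right t)"
  shows "\<phi> b \<le> \<phi> a"
proof (rule field_le_epsilon)
  fix e :: real assume "e > 0"
  define \<epsilon> where "\<epsilon> = min e (c / 2) / (b - a + 1)"
  have "\<epsilon> > 0"
    unfolding \<epsilon>_def using \<open>e > 0\<close> c ab by auto
  have "\<epsilon> * (b - a) \<le> \<epsilon> * (b - a + 1)"
    using \<open>\<epsilon> > 0\<close> by simp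
  also have "\<dots> = min e (c / 2)"
    unfolding \<epsilon>_def using ab by simp
  finally have "\<epsilon> * (b - a) < c" "\<epsilon> * (b - a) \<le> e"
    using c by auto
  with right_growth_le_imp_le[OF ab cont less_imp_le[OF \<open>\<epsilon> > 0\<close>]] growth \<open>\<epsilon> > 0\<close>
  show "\<phi> b \<le> \<phi> a + e"
    by force
qed

lemma right_dini_exp_weight:
  fixes u \<eta> :: "real \<Rightarrow> real"
  assumes growth: "\<And>\<epsilon>. \<epsilon> > 0 \<Longrightarrow> eventually (\<lambda>r. u r \<le> u t + (r - t) * (k * u t + \<epsilon>)) (at_right t)"
    and \<eta>: "(\<eta> has_real_derivative k) (at t within {t<..})"
    and "\<epsilon> > 0"
  shows "eventually (\<lambda>r. u r * exp (- \<eta> r) \<le> u t * exp (- \<eta> t) + (r - t) * \<epsilon>) (at_right t)"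
proof -
  define w where "w r = exp (- \<eta> r)" for r
  have w: "(w has_real_derivative (- k * w t)) (at t within {t<..})"
    unfolding w_def using \<eta> by (auto intro!: derivative_eq_intros)
  define \<epsilon>' where "\<epsilon>' = \<epsilon> / (w t + 1)"
  have "w t + 1 > 0"
    unfolding w_def by (simp add: add_pos_pos)
  then have "\<epsilon>' > 0"
    unfolding \<epsilon>'_def using \<open>\<epsilon> > 0\<close> by simp
  have "\<epsilon>' * w t + \<epsilon>' = \<epsilon>' * (w t + 1)"
    by (simp add: algebra_simps)
  also have "\<dots> = \<epsilon>"
    unfolding \<epsilon>'_def using \<open>w t + 1 > 0\<close> by simp
  finally have "\<epsilon>' * w t + \<epsilon>' = \<epsilon>" .
  define Q where "Q r = (k * u t + \<epsilon>') * w r + u t * ((w r - w t) / (r - t))" for r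
  have "(Q \<longlongrightarrow> (k * u t + \<epsilon>') * w t + u t * (- k * w t)) (at_right t)"
    unfolding Q_def using DERIV_continuous[OF w] w
    by (intro tendsto_intros) (simp_all add: continuous_within has_field_derivative_iff)
  then have "eventually (\<lambda>r. Q r < \<epsilon>' * w t + \<epsilon>') (at_right t)"
    by (rule order_tendstoD(2)) (use \<open>\<epsilon>' > 0\<close> in \<open>simp add: algebra_simps\<close>)
  with growth[OF \<open>\<epsilon>' > 0\<close>] eventually_at_right_less[of t] show ?thesis
  proof eventually_elim
    case (elim r)
    have "u r * w r \<le> (u t + (r - t) * (k * u t + \<epsilon>')) * w r"
      using elim(1) by (simp add: w_def)
    also have "\<dots> = u t * w t + (r - t) * Q r"
      unfolding Q_def using elim(2) by (simp add: field_simps)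
    also have "\<dots> \<le> u t * w t + (r - t) * \<epsilon>"
      using elim(2,3) \<open>\<epsilon>' * w t + \<epsilon>' = \<epsilon>\<close> by simp
    finally show ?case
      unfolding w_def .
  qed
qed

lemma gronwall_right_dini:
  fixes u \<eta> k :: "real \<Rightarrow> real"
  assumes ab: "a \<le> b" and "continuous_on {a..b} u" "continuous_on {a..b} \<eta>" and c: "c > 0"
    and growth: "\<And>t \<epsilon>. t \<in> {a..<b} \<Longrightarrow> u t * exp (- \<eta> t) < u a * exp (- \<eta> a) + c \<Longrightarrow> \<epsilon> > 0 \<Longrightarrow>
      eventually (\<lambda>r. u r \<le> u t + (r - t) * (k t * u t + \<epsilon>)) (at_right t)"
    and \<eta>: "\<And>t. t \<in> {a..<b} \<Longrightarrow> (\<eta> has_real_derivative k t) (at t within {t<..})"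
  shows "u b * exp (- \<eta> b) \<le> u a * exp (- \<eta> a)"
  using ab _ c
proof (rule right_dini_nonpos_imp_le)
  show "continuous_on {a..b} (\<lambda>r. u r * exp (- \<eta> r))"
    using assms(2,3) by (intro continuous_intros)
qed (use right_dini_exp_weight growth \<eta> in blast)

section \<open>Switching signals\<close>

lemma switching_signal_piecewise_const:
  assumes "switching_signal \<sigma>" "T > 0"
  obtains S where "finite S" "0 \<in> S" "S \<subseteq> {0..<T}"
    "\<forall>a\<in>S. \<forall>s. a \<le> s \<and> s < T \<and> (\<forall>x\<in>S. a < x \<longrightarrow> s < x) \<longrightarrow> \<sigma> s = \<sigma> a"
proof -
  obtain S0 where S0: "finite S0" "0 \<in> S0" "\<forall>t\<in>{0..<T}. \<sigma> t = \<sigma> (Max {s\<in>S0. s \<le> t})"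
    using assms unfolding switching_signal_def by blast
  define S where "S = {x\<in>S0. 0 \<le> x \<and> x < T}"
  have "\<sigma> s = \<sigma> a"
    if a: "a \<in> S" "a \<le> s" "s < T" and gap: "\<And>x. x \<in> S \<Longrightarrow> a < x \<Longrightarrow> s < x" for a s
  proof -
    have "x \<le> a" if "x \<in> S0" "x \<le> s" for x
    proof (rule ccontr)
      assume "\<not> x \<le> a"
      moreover have "a \<ge> 0"
        using a(1) unfolding S_def by simp
      ultimately have "x \<in> S"
        using that a(3) unfolding S_def by simp
      then show False
        using gap[of x] \<open>\<not> x \<le> a\<close> that(2) by simp
    qed
    then have "{x\<in>S0. x \<le> s} = {x\<in>S0. x \<le> a}"
      using a(2) by auto
    moreover have "s \<in> {0..<T}" "a \<in> {0..<T}"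
      using a unfolding S_def by auto
    ultimately show ?thesis
      using S0(3) by metis
  qed
  moreover have "finite S" "0 \<in> S" "S \<subseteq> {0..<T}"
    using S0(1,2) assms(2) unfolding S_def by auto
  ultimately show ?thesis
    using that by (metis (no_types, lifting))
qed

lemma switching_signal_right_const:
  assumes "switching_signal \<sigma>" "t \<ge> 0"
  obtains \<delta> where "\<delta> > 0" "\<And>s. s \<in> {t..<t+\<delta>} \<Longrightarrow> \<sigma> s = \<sigma> t"
proof -
  have "t + 1 > 0"
    using assms(2) by simp
  then obtain S where S: "finite S" "0 \<in> S" "S \<subseteq> {0..<t+1}"
    and const: "\<forall>a\<in>S. \<forall>s. a \<le> s \<and> s < t + 1 \<and> (\<forall>x\<in>S. a < x \<longrightarrow> s < x) \<longrightarrow> \<sigma> s = \<sigma> a"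
    by (rule switching_signal_piecewise_const[OF assms(1)])
  define a where "a = Max {x\<in>S. x \<le> t}"
  define m where "m = Min (insert (t + 1) {x\<in>S. t < x})"
  have "a \<in> {x\<in>S. x \<le> t}"
    unfolding a_def using S assms(2) by (intro Max_in) auto
  moreover have "x \<le> a" if "x \<in> S" "x \<le> t" for x
    unfolding a_def using S(1) that by (intro Max_ge) auto
  ultimately have a: "a \<in> S" "a \<le> t" "\<And>x. x \<in> S \<Longrightarrow> x \<le> t \<Longrightarrow> x \<le> a"
    by auto
  have m: "t < m" "m \<le> t + 1" "\<And>x. x \<in> S \<Longrightarrow> t < x \<Longrightarrow> m \<le> x"
    unfolding m_def using S(1) by auto
  have const_a: "\<sigma> s = \<sigma> a" if s: "s \<in> {t..<m}" for s
  proof (rule const[rule_format, OF a(1)], intro conjI ballI impI)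
    show "a \<le> s" "s < t + 1"
      using s a(2) m(2) by auto
    show "s < x" if "x \<in> S" "a < x" for x
      using a(3)[OF that(1)] m(3)[OF that(1)] that(2) s by force
  qed
  show ?thesis
  proof (rule that)
    show "m - t > 0"
      using m(1) by simp
    show "\<sigma> s = \<sigma> t" if "s \<in> {t..<t+(m-t)}" for s
      using const_a[of s] const_a[of t] that m(1) by simp
  qed
qed

lemma switching_signal_induct:
  assumes sw: "switching_signal \<sigma>" and "T > 0" and "Q 0"
    and step: "\<And>a b. 0 \<le> a \<Longrightarrow> a < b \<Longrightarrow> b \<le> T \<Longrightarrow> Q a \<Longrightarrow> (\<And>s. s \<in> {a..<b} \<Longrightarrow> \<sigma> s = \<sigma> a) \<Longrightarrow> Q b"
  shows "Q T"
proof -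
  obtain S where S: "finite S" "0 \<in> S" "S \<subseteq> {0..<T}"
    and const: "\<forall>a\<in>S. \<forall>s. a \<le> s \<and> s < T \<and> (\<forall>x\<in>S. a < x \<longrightarrow> s < x) \<longrightarrow> \<sigma> s = \<sigma> a"
    using switching_signal_piecewise_const[OF sw \<open>T > 0\<close>] by blast
  define S' where "S' = insert T S"
  have S': "finite S'" "0 \<in> S'" "S' \<subseteq> {0..T}"
    unfolding S'_def using S \<open>T > 0\<close> by auto
  have "Q a" if "a \<in> S'" for a
    using that
  proof (induction "card {s\<in>S'. s < a}" arbitrary: a rule: less_induct)
    case (less a)
    show ?case
    proof (cases "{s\<in>S'. s < a} = {}")
      case True
      then have "\<not> 0 < a"
        using S'(2) by blast
      moreover have "0 \<le> a"
        using S'(3) less.prems by auto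
      ultimately show ?thesis
        using \<open>Q 0\<close> by simp
    next
      case False
      define a0 where "a0 = Max {s\<in>S'. s < a}"
      have a0: "a0 \<in> S'" "a0 < a"
        using Max_in[OF _ False] S'(1) unfolding a0_def by auto
      have below: "x \<le> a0" if "x \<in> S'" "x < a" for x
        unfolding a0_def using S'(1) that by (intro Max_ge) auto
      have "card {s\<in>S'. s < a0} < card {s\<in>S'. s < a}"
        using a0 S'(1) by (intro psubset_card_mono) auto
      then have "Q a0"
        using less.hyps a0(1) by blast
      moreover have "a \<le> T" "0 \<le> a0"
        using S'(3) less.prems a0(1) by auto
      moreover have "a0 \<in> S"
        using a0 \<open>a \<le> T\<close> unfolding S'_def by auto
      moreover have "\<sigma> s = \<sigma> a0" if s: "s \<in> {a0..<a}" for s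
      proof (rule const[rule_format, OF \<open>a0 \<in> S\<close>], intro conjI ballI impI)
        show "a0 \<le> s" "s < T"
          using s \<open>a \<le> T\<close> by auto
        show "s < x" if "x \<in> S" "a0 < x" for x
          using below[of x] that s unfolding S'_def by force
      qed
      ultimately show ?thesis
        using step a0(2) by blast
    qed
  qed
  then show ?thesis
    unfolding S'_def by simp
qed

section \<open>Trajectories of the switched system\<close>

lemma finite_common_bound:
  fixes P :: "'p::finite \<Rightarrow> real \<Rightarrow> bool"
  assumes "\<And>p. \<exists>B\<ge>0. P p B" and mono: "\<And>p B B'. P p B \<Longrightarrow> B \<le> B' \<Longrightarrow> P p B'"
  shows "\<exists>B>0. \<forall>p. P p B"
proof -
  obtain B where B: "\<And>p. B p \<ge> 0 \<and> P p (B p)"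
    using assms(1) by metis
  have "B p \<le> (\<Sum>q\<in>UNIV. B q) + 1" for p
    using member_le_sum[of p UNIV B] B by simp
  moreover have "(\<Sum>q\<in>UNIV. B q) + 1 > 0"
    using B by (simp add: add_nonneg_pos sum_nonneg)
  ultimately show ?thesis
    using B mono by blast
qed

lemma continuously_differentiable_lipschitz_cball:
  assumes "continuously_differentiable g"
  shows "\<exists>L\<ge>0. \<forall>x\<in>cball 0 R. \<forall>y\<in>cball 0 R. norm (g x - g y) \<le> L * norm (x - y)"
proof -
  obtain g' where g': "\<And>x. (g has_derivative blinfun_apply (g' x)) (at x)" "continuous_on UNIV g'"
    using assms unfolding continuously_differentiable_def by blast
  obtain B where "B \<ge> 0" "\<And>x. x \<in> cball 0 R \<Longrightarrow> norm (g' x) \<le> B"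
    using continuous_on_compact_bound[OF compact_cball continuous_on_subset[OF g'(2)]] by blast
  then have "norm (g x - g y) \<le> B * norm (x - y)" if "x \<in> cball 0 R" "y \<in> cball 0 R" for x y
    by (intro differentiable_bound[OF convex_cball _ _ that])
      (auto intro: has_derivative_at_withinI g'(1) simp: norm_blinfun.rep_eq[symmetric])
  with \<open>B \<ge> 0\<close> show ?thesis
    by blast
qed

lemma continuously_differentiable_bounded_cball:
  assumes "continuously_differentiable g"
  shows "\<exists>B\<ge>0. \<forall>x\<in>cball 0 R. norm (g x) \<le> B"
proof -
  obtain g' where "\<And>x. (g has_derivative blinfun_apply (g' x)) (at x)"
    using assms unfolding continuously_differentiable_def by blast
  then have "continuous_on (cball 0 R) g"
    by (intro continuous_at_imp_continuous_on ballI has_derivative_continuous)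
  then show ?thesis
    by (metis compact_cball continuous_on_compact_bound)
qed

lemma norm_diff_right_growth:
  fixes \<xi>1 \<xi>2 :: "real \<Rightarrow> 'a::real_normed_vector"
  assumes "(\<xi>1 has_vector_derivative g (\<xi>1 t)) (at_right t)"
    and "(\<xi>2 has_vector_derivative g (\<xi>2 t)) (at_right t)"
    and lip: "norm (g (\<xi>1 t) - g (\<xi>2 t)) \<le> L * norm (\<xi>1 t - \<xi>2 t)" and "\<epsilon> > 0"
  shows "eventually (\<lambda>r. norm (\<xi>1 r - \<xi>2 r)
    \<le> norm (\<xi>1 t - \<xi>2 t) + (r - t) * (L * norm (\<xi>1 t - \<xi>2 t) + \<epsilon>)) (at_right t)"
proof -
  define d where "d = g (\<xi>1 t) - g (\<xi>2 t)"
  have "((\<lambda>r. \<xi>1 r - \<xi>2 r) has_vector_derivative d) (at_right t)"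
    unfolding d_def using assms(1,2) by (rule derivative_intros)
  from has_vector_derivative_right_approx[OF this \<open>\<epsilon> > 0\<close>] eventually_at_right_less[of t]
  show ?thesis
  proof eventually_elim
    case (elim r)
    have "norm (\<xi>1 r - \<xi>2 r) \<le> norm ((\<xi>1 t - \<xi>2 t) + (r - t) *\<^sub>R d) + (r - t) * \<epsilon>"
      using elim(1) norm_triangle_ineq2[of "\<xi>1 r - \<xi>2 r" "(\<xi>1 t - \<xi>2 t) + (r - t) *\<^sub>R d"]
      by (simp add: algebra_simps)
    also have "\<dots> \<le> norm (\<xi>1 t - \<xi>2 t) + (r - t) * norm d + (r - t) * \<epsilon>"
      using elim(2) norm_triangle_ineq[of "\<xi>1 t - \<xi>2 t" "(r - t) *\<^sub>R d"] by simp
    also have "\<dots> \<le> norm (\<xi>1 t - \<xi>2 t) + (r - t) * (L * norm (\<xi>1 t - \<xi>2 t)) + (r - t) * \<epsilon>"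
      using elim(2) lip unfolding d_def by (simp add: mult_left_mono)
    finally show ?case
      by (simp add: algebra_simps)
  qed
qed

lemma convex_hull_image_near:
  fixes g h :: "'a \<Rightarrow> 'b::real_normed_vector"
  assumes near: "\<And>x. x \<in> K \<Longrightarrow> norm (g x - h x) \<le> \<delta>" and v: "v \<in> convex hull (g ` K)"
  obtains w where "w \<in> convex hull (h ` K)" "norm (v - w) \<le> \<delta>"
proof -
  define C where "C = (\<Union>w\<in>convex hull (h ` K). \<Union>z\<in>cball 0 \<delta>. {w + z})"
  have "g ` K \<subseteq> C"
  proof
    fix y assume "y \<in> g ` K"
    then obtain x where "x \<in> K" "y = g x"
      by blast
    moreover have "h x \<in> convex hull (h ` K)" "g x - h x \<in> cball 0 \<delta>"
      using \<open>x \<in> K\<close> near[of x] by (auto intro: hull_inc simp: dist_norm norm_minus_commute)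
    ultimately show "y \<in> C"
      unfolding C_def by force
  qed
  moreover have "convex C"
    unfolding C_def by (intro convex_sums convex_convex_hull convex_cball)
  ultimately have "v \<in> C"
    using v hull_minimal by blast
  then show ?thesis
    using that unfolding C_def by (force simp: dist_norm)
qed

lemma SUP_convex_hull_image_le:
  fixes g :: "'b::real_normed_vector \<Rightarrow> real"
  assumes "K \<noteq> {}" "\<And>x. x \<in> K \<Longrightarrow> norm (\<phi> x - \<psi> x) \<le> \<delta>"
    and bdd: "bdd_above (g ` (convex hull (\<psi> ` K)))"
    and close: "\<And>v w. v \<in> convex hull (\<phi> ` K) \<Longrightarrow> w \<in> convex hull (\<psi> ` K) \<Longrightarrow> norm (v - w) \<le> \<delta> \<Longrightarrow>
      g v \<le> g w + e"
  shows "(SUP v\<in>convex hull (\<phi> ` K). g v) \<le> (SUP v\<in>convex hull (\<psi> ` K). g v) + e"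
proof (rule cSUP_least)
  show "convex hull (\<phi> ` K) \<noteq> {}"
    using assms(1) by simp
  fix v assume v: "v \<in> convex hull (\<phi> ` K)"
  obtain w where w: "w \<in> convex hull (\<psi> ` K)" "norm (v - w) \<le> \<delta>"
    by (rule convex_hull_image_near[OF assms(2) v])
  have "g v \<le> g w + e"
    by (rule close[OF v w])
  also have "g w \<le> (SUP v\<in>convex hull (\<psi> ` K). g v)"
    using w(1) bdd by (rule cSUP_upper)
  finally show "g v \<le> (SUP v\<in>convex hull (\<psi> ` K). g v) + e"
    by simp
qed

locale switched_system =
  fixes f :: "'p::finite \<Rightarrow> real^'n \<Rightarrow> real^'n" and \<sigma> :: "real \<Rightarrow> 'p"
  assumes C1: "\<And>p. continuously_differentiable (f p)"
    and forward_complete: "\<And>p. forward_complete (f p)"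
    and switching: "switching_signal \<sigma>"
begin

lemma lipschitz_cball:
  "\<exists>L>0. \<forall>p. \<forall>x\<in>cball 0 R. \<forall>y\<in>cball 0 R. norm (f p x - f p y) \<le> L * norm (x - y)"
  by (rule finite_common_bound[OF continuously_differentiable_lipschitz_cball[OF C1]])
    (meson mult_right_mono norm_ge_zero order_trans)

lemma bounded_cball: "\<exists>B>0. \<forall>p. \<forall>x\<in>cball 0 R. norm (f p x) \<le> B"
  by (rule finite_common_bound[OF continuously_differentiable_bounded_cball[OF C1]])
    (meson order_trans)

definition solution_on :: "real^'n \<Rightarrow> real \<Rightarrow> (real \<Rightarrow> real^'n) \<Rightarrow> bool" where
  "solution_on x T \<xi> \<longleftrightarrow> \<xi> 0 = x \<and> continuous_on {0..T} \<xi> \<and>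
     (\<forall>t\<in>{0..<T}. (\<xi> has_vector_derivative f (\<sigma> t) (\<xi> t)) (at_right t))"

lemma solution_on_mono: "solution_on x T \<xi> \<Longrightarrow> T' \<le> T \<Longrightarrow> solution_on x T' \<xi>"
  unfolding solution_on_def by (auto intro: continuous_on_subset)

lemma solution_on_unique:
  assumes sol1: "solution_on x T \<xi>1" and sol2: "solution_on x T \<xi>2" and s: "s \<in> {0..T}"
  shows "\<xi>1 s = \<xi>2 s"
proof -
  obtain R1 R2 where "\<And>s. s \<in> {0..T} \<Longrightarrow> norm (\<xi>1 s) \<le> R1" "\<And>s. s \<in> {0..T} \<Longrightarrow> norm (\<xi>2 s) \<le> R2"
    using sol1 sol2 unfolding solution_on_def by (metis compact_Icc continuous_on_compact_bound)
  then obtain L where L: "L > 0" "\<And>p t. t \<in> {0..T} \<Longrightarrow>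
      norm (f p (\<xi>1 t) - f p (\<xi>2 t)) \<le> L * norm (\<xi>1 t - \<xi>2 t)"
    using lipschitz_cball[of "max R1 R2"] by (meson le_max_iff_disj mem_cball_0)
  define u where "u r = norm (\<xi>1 r - \<xi>2 r)" for r
  have "u s * exp (- (L * s)) \<le> u 0 * exp (- (L * 0))"
  proof (rule gronwall_right_dini[where k="\<lambda>_. L" and c=1])
    show "continuous_on {0..s} u"
      unfolding u_def using sol1 sol2 s unfolding solution_on_def
      by (intro continuous_intros) (auto intro: continuous_on_subset)
    fix t \<epsilon> :: real assume t: "t \<in> {0..<s}" and "\<epsilon> > 0"
    then show "eventually (\<lambda>r. u r \<le> u t + (r - t) * (L * u t + \<epsilon>)) (at_right t)"
      unfolding u_def using sol1 sol2 s L(2)[of t]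
      by (intro norm_diff_right_growth) (auto simp: solution_on_def)
  qed (use s in \<open>auto intro!: derivative_eq_intros continuous_intros\<close>)
  moreover have "u 0 = 0"
    unfolding u_def using sol1 sol2 unfolding solution_on_def by simp
  ultimately show ?thesis
    unfolding u_def by (simp add: mult_le_0_iff)
qed

lemma solution_on_append:
  assumes sol: "solution_on x a \<xi>" and "0 \<le> a" "a < b"
    and const: "\<And>s. s \<in> {a..<b} \<Longrightarrow> \<sigma> s = q"
    and y0: "y 0 = \<xi> a" and y: "\<And>t. t \<ge> 0 \<Longrightarrow> (y has_vector_derivative f q (y t)) (at t within {0..})"
  shows "solution_on x b (\<lambda>t. if t \<le> a then \<xi> t else y (t - a))"
  unfolding solution_on_def
proof (intro conjI ballI)
  let ?\<xi> = "\<lambda>t. if t \<le> a then \<xi> t else y (t - a)"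
  show "?\<xi> 0 = x"
    using sol \<open>0 \<le> a\<close> unfolding solution_on_def by simp
  have "continuous_on {0..} y"
    using y by (auto simp: continuous_on_eq_continuous_within intro: has_vector_derivative_continuous)
  show "continuous_on {0..b} ?\<xi>"
  proof (rule continuous_on_cases_le[OF _ _ continuous_on_id])
    show "continuous_on {t \<in> {0..b}. t \<le> a} \<xi>"
      using sol unfolding solution_on_def by (auto intro: continuous_on_subset)
    show "continuous_on {t \<in> {0..b}. a \<le> t} (\<lambda>t. y (t - a))"
      by (rule continuous_on_compose2[OF \<open>continuous_on {0..} y\<close>]) (auto intro!: continuous_intros)
  qed (use y0 in simp)
  fix t assume t: "t \<in> {0..<b}"
  show "(?\<xi> has_vector_derivative f (\<sigma> t) (?\<xi> t)) (at_right t)"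
  proof (cases "t < a")
    case True
    then have "(\<xi> has_vector_derivative f (\<sigma> t) (\<xi> t)) (at t within {t..})"
      using sol t at_within_Ici_at_right[of t] unfolding solution_on_def by auto
    then have "(?\<xi> has_vector_derivative f (\<sigma> t) (\<xi> t)) (at t within {t..})"
      by (rule has_vector_derivative_transform_within[where d="a - t"])
        (use True in \<open>auto simp: dist_real_def\<close>)
    then show ?thesis
      using True by (simp add: at_within_Ici_at_right)
  next
    case False
    have eq: "y (r - a) = ?\<xi> r" if "r \<in> {t..}" for r
    proof (cases "r \<le> a")
      case True
      then have "r = a"
        using that False by simp
      then show ?thesis
        using y0 by simp
    qed simp
    have "((\<lambda>r. r - a) has_vector_derivative 1) (at t within {t..})"
      by (auto intro!: derivative_eq_intros)
    moreover have "(y has_vector_derivative f q (y (t - a))) (at (t - a) within (\<lambda>r. r - a) ` {t..})"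
      using False by (intro has_vector_derivative_within_subset[OF y]) auto
    ultimately have "((\<lambda>r. y (r - a)) has_vector_derivative f q (y (t - a))) (at t within {t..})"
      using vector_diff_chain_within by (fastforce simp: o_def)
    then have "(?\<xi> has_vector_derivative f q (y (t - a))) (at t within {t..})"
      by (rule has_vector_derivative_transform_within[where d=1]) (simp_all add: eq)
    moreover have "?\<xi> t = y (t - a)" "\<sigma> t = q"
      using False y0 const[of t] t by auto
    ultimately show ?thesis
      by (simp add: at_within_Ici_at_right)
  qed
qed

lemma solution_on_exists:
  assumes "T > 0"
  shows "\<exists>\<xi>. solution_on x T \<xi>"
proof (rule switching_signal_induct[OF switching \<open>T > 0\<close>, where Q="\<lambda>T. \<exists>\<xi>. solution_on x T \<xi>"])
  show "\<exists>\<xi>. solution_on x 0 \<xi>"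
    by (rule exI[of _ "\<lambda>_. x"]) (simp add: solution_on_def)
next
  fix a b assume "0 \<le> a" "a < b" "b \<le> T" "\<exists>\<xi>. solution_on x a \<xi>"
    and const: "\<And>s. s \<in> {a..<b} \<Longrightarrow> \<sigma> s = \<sigma> a"
  then obtain \<xi> where sol: "solution_on x a \<xi>"
    by blast
  obtain y where y0: "y 0 = \<xi> a"
    and y: "\<And>t. t \<ge> 0 \<Longrightarrow> (y has_vector_derivative f (\<sigma> a) (y t)) (at t within {0..})"
    using forward_complete[of "\<sigma> a"] unfolding forward_complete_def by blast
  have "solution_on x b (\<lambda>t. if t \<le> a then \<xi> t else y (t - a))"
    using sol \<open>0 \<le> a\<close> \<open>a < b\<close> const y0 y by (rule solution_on_append)
  then show "\<exists>\<xi>. solution_on x b \<xi>"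
    by blast
qed

lemma switched_sol_solution_on: "switched_sol f \<sigma> x \<xi> \<Longrightarrow> solution_on x T \<xi>"
  unfolding switched_sol_def solution_on_def using at_within_Ici_at_right
  by (auto intro: continuous_on_subset)

text \<open>A global solution is assembled from solutions on \<open>[0, t + 1]\<close>, which agree by
  uniqueness.\<close>
lemma switched_sol_exists: "\<exists>\<xi>. switched_sol f \<sigma> x \<xi>"
proof -
  define \<Xi> where "\<Xi> T = (SOME \<xi>. solution_on x T \<xi>)" for T
  have sol: "solution_on x T (\<Xi> T)" if "T > 0" for T
    unfolding \<Xi>_def using solution_on_exists[OF that] by (rule someI_ex)
  define \<xi> where "\<xi> t = \<Xi> (t + 1) t" for t
  have eq: "\<Xi> (t + 2) r = \<xi> r" if "t \<ge> 0" "r \<in> {0..t+2}" "dist r t < 1" for t r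
  proof -
    have "r \<ge> 0" "r + 1 \<le> t + 2"
      using that by (auto simp: dist_real_def)
    then have "solution_on x (r + 1) (\<Xi> (t + 2))" "solution_on x (r + 1) (\<Xi> (r + 1))"
      using that(1) by (auto intro: sol solution_on_mono[OF sol])
    then show ?thesis
      unfolding \<xi>_def using \<open>r \<ge> 0\<close> by (intro solution_on_unique) auto
  qed
  have "switched_sol f \<sigma> x \<xi>"
    unfolding switched_sol_def
  proof (intro conjI allI impI)
    show "\<xi> 0 = x"
      unfolding \<xi>_def using sol[of 1] unfolding solution_on_def by simp
    show "continuous_on {0..} \<xi>"
      unfolding continuous_on_eq_continuous_within
    proof
      fix t :: real assume t: "t \<in> {0..}"
      have "at t within {0..} = at t within {0..t+2}"
        by (rule at_within_nhd[of _ "{..<t+1}"]) (use t in auto)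
      moreover have "continuous (at t within {0..t+2}) (\<Xi> (t + 2))"
        using sol[of "t + 2"] t unfolding solution_on_def continuous_on_eq_continuous_within by auto
      then have "continuous (at t within {0..t+2}) \<xi>"
        by (rule continuous_transform_within[where \<delta>=1]) (use t in \<open>simp_all add: eq\<close>)
      ultimately show "continuous (at t within {0..}) \<xi>"
        by simp
    qed
    fix t :: real assume t: "t \<ge> 0"
    have "(\<Xi> (t + 2) has_vector_derivative f (\<sigma> t) (\<Xi> (t + 2) t)) (at t within {t..t+2})"
      using sol[of "t + 2"] t at_within_Icc_at_right[of t "t + 2"] unfolding solution_on_def by auto
    then have "(\<Xi> (t + 2) has_vector_derivative f (\<sigma> t) (\<xi> t)) (at t within {t..t+2})"
      using eq[of t t] t by simp
    then have "(\<xi> has_vector_derivative f (\<sigma> t) (\<xi> t)) (at t within {t..t+2})"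
      by (rule has_vector_derivative_transform_within[where d=1]) (use t in \<open>simp_all add: eq\<close>)
    then show "(\<xi> has_vector_derivative f (\<sigma> t) (\<xi> t)) (at t within {t..})"
      using at_within_Icc_at_right[of t "t + 2"] at_within_Ici_at_right[of t] by simp
  qed
  then show ?thesis
    by blast
qed

abbreviation flow :: "real \<Rightarrow> real^'n \<Rightarrow> real^'n" where
  "flow t x \<equiv> switched_flow f \<sigma> t x"

lemma flow_eq:
  assumes sol: "switched_sol f \<sigma> x \<xi>" and "t \<ge> 0"
  shows "flow t x = \<xi> t"
  unfolding switched_flow_def
proof (rule the_equality)
  show "\<exists>\<xi>'. switched_sol f \<sigma> x \<xi>' \<and> \<xi>' t = \<xi> t"
    using sol by blast
  fix y assume "\<exists>\<xi>'. switched_sol f \<sigma> x \<xi>' \<and> \<xi>' t = y"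
  then obtain \<xi>' where sol': "switched_sol f \<sigma> x \<xi>'" and "\<xi>' t = y"
    by blast
  then show "y = \<xi> t"
    using solution_on_unique[where T=t and s=t,
        OF switched_sol_solution_on[OF sol'] switched_sol_solution_on[OF sol]] \<open>t \<ge> 0\<close>
    by simp
qed

lemma switched_sol_flow: "switched_sol f \<sigma> x (\<lambda>t. flow t x)"
proof -
  obtain \<xi> where sol: "switched_sol f \<sigma> x \<xi>"
    using switched_sol_exists by blast
  have eq: "flow t x = \<xi> t" if "t \<in> {0..}" for t
    using flow_eq[OF sol] that by simp
  have \<xi>: "\<xi> 0 = x" "continuous_on {0..} \<xi>"
    "\<And>t. t \<ge> 0 \<Longrightarrow> (\<xi> has_vector_derivative f (\<sigma> t) (\<xi> t)) (at t within {t..})"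
    using sol unfolding switched_sol_def by blast+
  show ?thesis
    unfolding switched_sol_def
  proof (intro conjI allI impI)
    show "flow 0 x = x"
      using eq[of 0] \<xi>(1) by simp
    have "continuous_on {0..} (\<lambda>t. flow t x) = continuous_on {0..} \<xi>"
      by (rule continuous_on_cong) (simp_all add: eq)
    with \<xi>(2) show "continuous_on {0..} (\<lambda>t. flow t x)"
      by simp
    fix t :: real assume "t \<ge> 0"
    have "(\<xi> has_vector_derivative f (\<sigma> t) (flow t x)) (at t within {t..})"
      using \<xi>(3)[OF \<open>t \<ge> 0\<close>] eq[of t] \<open>t \<ge> 0\<close> by simp
    then show "((\<lambda>t. flow t x) has_vector_derivative f (\<sigma> t) (flow t x)) (at t within {t..})"
      by (rule has_vector_derivative_transform_within[where d=1]) (use \<open>t \<ge> 0\<close> eq in auto)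
  qed
qed

lemma flow_0 [simp]: "flow 0 x = x"
  using switched_sol_flow[of x] unfolding switched_sol_def by simp

lemma continuous_on_flow: "continuous_on {0..} (\<lambda>s. flow s x)"
  using switched_sol_flow[of x] unfolding switched_sol_def by simp

lemma flow_has_right_derivative:
  assumes "t \<ge> 0"
  shows "((\<lambda>s. flow s x) has_vector_derivative f (\<sigma> t) (flow t x)) (at_right t)"
proof -
  have "((\<lambda>s. flow s x) has_vector_derivative f (\<sigma> t) (flow t x)) (at t within {t..})"
    using switched_sol_flow[of x] assms unfolding switched_sol_def by blast
  then show ?thesis
    by (simp add: at_within_Ici_at_right)
qed

text \<open>Nearby trajectories stay in the ball where a common Lipschitz constant is available;
  the comparison principle may use the Lipschitz bound only while this is still known.\<close>
lemma flow_locally_bounded: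
  assumes "T \<ge> 0"
  shows "\<exists>\<delta>>0. \<exists>R. \<forall>x s. norm (x - x0) < \<delta> \<longrightarrow> s \<in> {0..T} \<longrightarrow> norm (flow s x) \<le> R"
proof -
  obtain R0 where R0: "\<And>s. s \<in> {0..T} \<Longrightarrow> norm (flow s x0) \<le> R0"
    using continuous_on_compact_bound[OF compact_Icc continuous_on_subset[OF continuous_on_flow]]
    by (metis atLeastAtMost_iff atLeast_iff subsetI)
  obtain L where L: "L > 0" "\<And>p x y. x \<in> cball 0 (R0 + 1) \<Longrightarrow> y \<in> cball 0 (R0 + 1) \<Longrightarrow>
      norm (f p x - f p y) \<le> L * norm (x - y)"
    using lipschitz_cball by blast
  define \<delta> where "\<delta> = exp (- (L * T)) / 2"
  have "\<delta> > 0"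
    unfolding \<delta>_def by simp
  have "norm (flow s x) \<le> R0 + 1" if x: "norm (x - x0) < \<delta>" and s: "s \<in> {0..T}" for x s
  proof -
    define u where "u r = norm (flow r x - flow r x0)" for r
    have "u s * exp (- (L * s)) \<le> u 0 * exp (- (L * 0))"
    proof (rule gronwall_right_dini[where k="\<lambda>_. L" and c=\<delta>])
      show "continuous_on {0..s} u"
        unfolding u_def by (intro continuous_intros continuous_on_subset[OF continuous_on_flow]) auto
      fix t \<epsilon> :: real
      assume t: "t \<in> {0..<s}" and below: "u t * exp (- (L * t)) < u 0 * exp (- (L * 0)) + \<delta>"
        and "\<epsilon> > 0"
      have "u t * exp (- (L * t)) < exp (- (L * T))"
        using below x unfolding u_def \<delta>_def by simp
      also have "\<dots> \<le> exp (- (L * t))"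
        using t s L(1) by (simp add: mult_left_mono)
      finally have "u t < 1"
        by simp
      then have "flow t x \<in> cball 0 (R0 + 1)" "flow t x0 \<in> cball 0 (R0 + 1)"
        using R0[of t] t s norm_triangle_ineq2[of "flow t x" "flow t x0"] unfolding u_def by auto
      then show "eventually (\<lambda>r. u r \<le> u t + (r - t) * (L * u t + \<epsilon>)) (at_right t)"
        unfolding u_def using t \<open>\<epsilon> > 0\<close>
        by (intro norm_diff_right_growth[where g="f (\<sigma> t)"] flow_has_right_derivative L(2)) auto
    qed (use s \<open>\<delta> > 0\<close> in \<open>auto intro!: derivative_eq_intros continuous_intros\<close>)
    then have "u s \<le> norm (x - x0) * exp (L * s)"
      unfolding u_def by (simp add: field_simps exp_minus)
    also have "\<dots> \<le> \<delta> * exp (L * T)"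
      using x s L(1) \<open>\<delta> > 0\<close> by (intro mult_mono) auto
    also have "\<dots> = 1 / 2"
      unfolding \<delta>_def by (simp add: exp_minus field_simps)
    finally show ?thesis
      using R0[OF s] norm_triangle_ineq2[of "flow s x" "flow s x0"] unfolding u_def by simp
  qed
  with \<open>\<delta> > 0\<close> show ?thesis
    by blast
qed

lemma flow_bounded:
  assumes "compact K" "T \<ge> 0"
  obtains R where "\<And>x s. x \<in> K \<Longrightarrow> s \<in> {0..T} \<Longrightarrow> norm (flow s x) \<le> R"
proof -
  have "\<forall>x0. \<exists>\<delta> R. \<delta> > 0 \<and> (\<forall>x s. norm (x - x0) < \<delta> \<longrightarrow> s \<in> {0..T} \<longrightarrow> norm (flow s x) \<le> R)"
    using flow_locally_bounded[OF assms(2)] by blast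
  then obtain \<delta> R where \<delta>: "\<And>x0. \<delta> x0 > 0"
    and R: "\<And>x0 x s. norm (x - x0) < \<delta> x0 \<Longrightarrow> s \<in> {0..T} \<Longrightarrow> norm (flow s x) \<le> R x0"
    by metis
  have "K \<subseteq> (\<Union>c\<in>K. ball c (\<delta> c))"
    using \<delta> by force
  then obtain C where C: "C \<subseteq> K" "finite C" "K \<subseteq> (\<Union>c\<in>C. ball c (\<delta> c))"
    using compactE_image[OF assms(1), of K "\<lambda>c. ball c (\<delta> c)"] by blast
  have "norm (flow s x) \<le> (\<Sum>c\<in>C. \<bar>R c\<bar>)" if x: "x \<in> K" and s: "s \<in> {0..T}" for x s
  proof -
    obtain c where "c \<in> C" "x \<in> ball c (\<delta> c)"
      using C(3) x by blast
    then have "norm (flow s x) \<le> \<bar>R c\<bar>"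
      using R[of x c s] s by (force simp: dist_norm norm_minus_commute)
    also have "\<dots> \<le> (\<Sum>c\<in>C. \<bar>R c\<bar>)"
      using \<open>c \<in> C\<close> C(2) by (intro member_le_sum) auto
    finally show ?thesis .
  qed
  then show ?thesis
    using that by blast
qed

lemma flow_time_lipschitz:
  assumes B: "\<And>p y. y \<in> cball 0 R \<Longrightarrow> norm (f p y) \<le> B"
    and R: "\<And>s. s \<in> {a..b} \<Longrightarrow> norm (flow s x) \<le> R" and "0 \<le> a" "a \<le> b"
  shows "norm (flow b x - flow a x) \<le> B * (b - a)"
proof -
  define \<phi> where "\<phi> r = norm (flow r x - flow a x) - B * (r - a)" for r
  have "\<phi> b \<le> \<phi> a"
  proof (rule right_dini_nonpos_imp_le[OF \<open>a \<le> b\<close> _ zero_less_one])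
    show "continuous_on {a..b} \<phi>"
      unfolding \<phi>_def using \<open>0 \<le> a\<close>
      by (intro continuous_intros continuous_on_subset[OF continuous_on_flow]) auto
    fix t \<epsilon> :: real assume t: "t \<in> {a..<b}" and "\<epsilon> > 0"
    have B_t: "norm (f (\<sigma> t) (flow t x)) \<le> B"
      using B R[of t] t by auto
    have "t \<ge> 0"
      using t \<open>0 \<le> a\<close> by simp
    show "eventually (\<lambda>r. \<phi> r \<le> \<phi> t + (r - t) * \<epsilon>) (at_right t)"
      using has_vector_derivative_right_approx[OF flow_has_right_derivative[OF \<open>t \<ge> 0\<close>, where x=x] \<open>\<epsilon> > 0\<close>]
        eventually_at_right_less[of t]
    proof eventually_elim
      case (elim r)
      have "norm (flow r x - flow a x) \<le> norm (flow t x - flow a x) + norm (flow r x - flow t x)"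
        using norm_triangle_ineq[of "flow t x - flow a x" "flow r x - flow t x"] by simp
      also have "norm (flow r x - flow t x) \<le> norm ((r - t) *\<^sub>R f (\<sigma> t) (flow t x)) + (r - t) * \<epsilon>"
        using elim(1) norm_triangle_ineq2[of "flow r x - flow t x" "(r - t) *\<^sub>R f (\<sigma> t) (flow t x)"]
        by (simp add: algebra_simps)
      also have "norm ((r - t) *\<^sub>R f (\<sigma> t) (flow t x)) \<le> (r - t) * B"
        using elim(2) B_t by (simp add: mult_left_mono)
      finally show ?case
        unfolding \<phi>_def by (simp add: algebra_simps)
    qed
  qed
  then show ?thesis
    unfolding \<phi>_def by simp
qed

lemma bdd_above_SUP_hull_flow:
  fixes g :: "real^'n \<Rightarrow> real"
  assumes "compact K" "continuous_on UNIV g" "s \<ge> 0"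
  shows "bdd_above (g ` (convex hull (flow s ` K)))"
proof -
  obtain R where "\<And>x r. x \<in> K \<Longrightarrow> r \<in> {0..s} \<Longrightarrow> norm (flow r x) \<le> R"
    using flow_bounded[OF assms(1,3)] by blast
  then have "convex hull (flow s ` K) \<subseteq> cball 0 R"
    using assms(3) by (intro hull_minimal convex_cball) auto
  moreover obtain M where "\<And>v. v \<in> cball 0 R \<Longrightarrow> norm (g v) \<le> M"
    using continuous_on_compact_bound[OF compact_cball continuous_on_subset[OF assms(2)]] by blast
  ultimately show ?thesis
    by (intro bdd_aboveI2[where M=M]) (auto simp: abs_le_iff)
qed

lemma flow_time_lipschitz_compact:
  assumes "compact K" "T \<ge> 0"
  obtains B where "B > 0"
    "\<And>x s s'. x \<in> K \<Longrightarrow> s \<in> {0..T} \<Longrightarrow> s' \<in> {0..T} \<Longrightarrow> norm (flow s x - flow s' x) \<le> B * \<bar>s - s'\<bar>"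
proof -
  obtain R where R: "\<And>x s. x \<in> K \<Longrightarrow> s \<in> {0..T} \<Longrightarrow> norm (flow s x) \<le> R"
    using flow_bounded[OF assms] by blast
  obtain B where B: "B > 0" "\<And>p y. y \<in> cball 0 R \<Longrightarrow> norm (f p y) \<le> B"
    using bounded_cball by blast
  have "norm (flow s x - flow s' x) \<le> B * \<bar>s - s'\<bar>"
    if "x \<in> K" "s \<in> {0..T}" "s' \<in> {0..T}" for x s s'
    using flow_time_lipschitz[OF B(2), where a=s' and b=s and x=x]
      flow_time_lipschitz[OF B(2), where a=s and b=s' and x=x] R that
    by (cases "s' \<le> s") (auto simp: norm_minus_commute)
  with B(1) show ?thesis
    using that by blast
qed

text \<open>The convex hulls at nearby times are uniformly close, and a uniformly continuous function
  has nearby suprema over them.\<close>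
lemma continuous_on_SUP_hull_flow:
  fixes g :: "real^'n \<Rightarrow> real"
  assumes K: "compact K" "K \<noteq> {}" and g: "continuous_on UNIV g" and "T \<ge> 0"
  shows "continuous_on {0..T} (\<lambda>s. SUP v\<in>convex hull (flow s ` K). g v)"
proof -
  obtain R where R: "\<And>x s. x \<in> K \<Longrightarrow> s \<in> {0..T} \<Longrightarrow> norm (flow s x) \<le> R"
    using flow_bounded[OF K(1) \<open>T \<ge> 0\<close>] by blast
  obtain B where B: "B > 0" and time_lip: "\<And>x s s'. x \<in> K \<Longrightarrow> s \<in> {0..T} \<Longrightarrow> s' \<in> {0..T} \<Longrightarrow>
      norm (flow s x - flow s' x) \<le> B * \<bar>s - s'\<bar>"
    using flow_time_lipschitz_compact[OF K(1) \<open>T \<ge> 0\<close>] by blast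
  have hull: "convex hull (flow s ` K) \<subseteq> cball 0 R" if "s \<in> {0..T}" for s
    using R that by (intro hull_minimal convex_cball) auto
  let ?G = "\<lambda>s. SUP v\<in>convex hull (flow s ` K). g v"
  have step: "?G s \<le> ?G s' + e"
    if s: "s \<in> {0..T}" "s' \<in> {0..T}" and "B * \<bar>s - s'\<bar> < d"
      and d: "\<And>v w. v \<in> cball 0 R \<Longrightarrow> w \<in> cball 0 R \<Longrightarrow> dist v w < d \<Longrightarrow> dist (g v) (g w) < e"
    for s s' d e
  proof (rule SUP_convex_hull_image_le[OF K(2)])
    show "norm (flow s x - flow s' x) \<le> B * \<bar>s - s'\<bar>" if "x \<in> K" for x
      using time_lip that s by blast
    show "bdd_above (g ` (convex hull (flow s' ` K)))"
      using s(2) by (intro bdd_above_SUP_hull_flow K(1) g) simp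
    fix v w assume "v \<in> convex hull (flow s ` K)" "w \<in> convex hull (flow s' ` K)"
      "norm (v - w) \<le> B * \<bar>s - s'\<bar>"
    then show "g v \<le> g w + e"
      using d[of v w] hull s \<open>B * \<bar>s - s'\<bar> < d\<close> by (force simp: dist_norm dist_real_def)
  qed
  have "uniformly_continuous_on (cball 0 R) g"
    by (intro compact_uniformly_continuous continuous_on_subset[OF g]) auto
  show ?thesis
    unfolding continuous_on_iff
  proof (intro ballI allI impI)
    fix s e :: real assume s: "s \<in> {0..T}" and "e > 0"
    then obtain d where "d > 0"
      and d: "\<And>v w. v \<in> cball 0 R \<Longrightarrow> w \<in> cball 0 R \<Longrightarrow> dist v w < d \<Longrightarrow> dist (g v) (g w) < e / 2"
      using \<open>uniformly_continuous_on (cball 0 R) g\<close> unfolding uniformly_continuous_on_def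
      by (metis half_gt_zero)
    show "\<exists>\<delta>>0. \<forall>s'\<in>{0..T}. dist s' s < \<delta> \<longrightarrow> dist (?G s') (?G s) < e"
    proof (intro exI[of _ "d / B"] conjI ballI impI)
      show "d / B > 0"
        using \<open>d > 0\<close> B by simp
      fix s' assume s': "s' \<in> {0..T}" and "dist s' s < d / B"
      then have "B * \<bar>s - s'\<bar> < d" "B * \<bar>s' - s\<bar> < d"
        using B by (simp_all add: dist_real_def field_simps abs_minus_commute)
      then have "?G s' \<le> ?G s + e / 2" "?G s \<le> ?G s' + e / 2"
        using step[OF s' s _ d] step[OF s s' _ d] by auto
      then show "dist (?G s') (?G s) < e"
        using \<open>e > 0\<close> by (simp add: dist_real_def abs_le_iff)
    qed
  qed
qed

end

section \<open>Integrals along the switching signal\<close>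

definition switched_integral :: "(real \<Rightarrow> 'p::finite) \<Rightarrow> ('p \<Rightarrow> real \<Rightarrow> real) \<Rightarrow> real \<Rightarrow> real" where
  "switched_integral \<sigma> G t = (\<Sum>p\<in>UNIV. integral {0..t} (\<lambda>s. G p s * (if \<sigma> s = p then 1 else 0)))"

lemma integrable_on_mode:
  fixes G :: "real \<Rightarrow> real"
  assumes sw: "switching_signal \<sigma>" and G: "continuous_on {0..t} G" and "t \<ge> 0"
  shows "(\<lambda>s. G s * (if \<sigma> s = p then 1 else 0)) integrable_on {0..t}"
proof (cases "t = 0")
  case False
  with \<open>t \<ge> 0\<close> have "t > 0"
    by simp
  show ?thesis
  proof (rule switching_signal_induct[OF sw \<open>t > 0\<close>,
        where Q="\<lambda>b. (\<lambda>s. G s * (if \<sigma> s = p then 1 else 0)) integrable_on {0..b}"])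
    fix a b assume ab: "0 \<le> a" "a < b" "b \<le> t"
      and int: "(\<lambda>s. G s * (if \<sigma> s = p then 1 else 0)) integrable_on {0..a}"
      and const: "\<And>s. s \<in> {a..<b} \<Longrightarrow> \<sigma> s = \<sigma> a"
    define c where "c = (if \<sigma> a = p then 1 else (0::real))"
    have int_c: "(\<lambda>s. G s * c) integrable_on {a..b}"
      using ab by (intro integrable_continuous_real continuous_intros continuous_on_subset[OF G]) auto
    have "G s * (if \<sigma> s = p then 1 else 0) = G s * c" if "s \<in> {a..b} - {b}" for s
      using const[of s] that unfolding c_def by simp
    then have "(\<lambda>s. G s * (if \<sigma> s = p then 1 else 0)) integrable_on {a..b}"
      by (rule integrable_spike_finite[OF finite.insertI[OF finite.emptyI] _ int_c])
    then show "(\<lambda>s. G s * (if \<sigma> s = p then 1 else 0)) integrable_on {0..b}"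
      using ab by (intro Henstock_Kurzweil_Integration.integrable_combine[OF _ _ int]) auto
  qed (use integrable_on_refl[of _ "0::real"] in simp)
qed (use integrable_on_refl[of _ "0::real"] in simp)

text \<open>Since \<open>\<sigma>\<close> is right-continuous, the integrand is continuous from the right, which gives
  the right derivative of its integral.\<close>
lemma integral_mode_has_right_derivative:
  fixes G :: "real \<Rightarrow> real"
  assumes sw: "switching_signal \<sigma>" and G: "\<And>T. T \<ge> 0 \<Longrightarrow> continuous_on {0..T} G" and "t \<ge> 0"
  shows "((\<lambda>r. integral {0..r} (\<lambda>s. G s * (if \<sigma> s = p then 1 else 0))) has_real_derivative
    G t * (if \<sigma> t = p then 1 else 0)) (at t within {t<..})"
proof -
  let ?h = "\<lambda>s. G s * (if \<sigma> s = p then 1 else 0)"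
  obtain \<delta> where "\<delta> > 0" and \<delta>: "\<And>s. s \<in> {t..<t+\<delta>} \<Longrightarrow> \<sigma> s = \<sigma> t"
    using switching_signal_right_const[OF sw \<open>t \<ge> 0\<close>] by blast
  define d where "d = min \<delta> 1"
  have "d > 0" "d \<le> \<delta>"
    unfolding d_def using \<open>\<delta> > 0\<close> by auto
  have int: "?h integrable_on {0..t+d}"
    using \<open>t \<ge> 0\<close> \<open>d > 0\<close> by (intro integrable_on_mode[OF sw G]) auto
  have "continuous (at t within {t..t+d}) ?h"
  proof (rule continuous_transform_within[where \<delta>=d])
    have "continuous_on {t..t+d} (\<lambda>s. G s * (if \<sigma> t = p then 1 else 0))"
      using \<open>t \<ge> 0\<close> \<open>d > 0\<close> by (intro continuous_intros continuous_on_subset[OF G[of "t + d"]]) auto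
    then show "continuous (at t within {t..t+d}) (\<lambda>s. G s * (if \<sigma> t = p then 1 else 0))"
      using \<open>d > 0\<close> unfolding continuous_on_eq_continuous_within by auto
    show "G s * (if \<sigma> t = p then 1 else 0) = ?h s" if "s \<in> {t..t+d}" "dist s t < d" for s
      using \<delta>[of s] that \<open>d \<le> \<delta>\<close> by (simp add: dist_real_def)
  qed (use \<open>d > 0\<close> in auto)
  then have "((\<lambda>u. integral {t..u} ?h) has_vector_derivative ?h t) (at t within {t..t+d})"
    using integral_has_vector_derivative_continuous_at[of ?h t "t + d" t "{}"]
      integrable_subinterval_real[OF int, of t "t + d"] \<open>t \<ge> 0\<close> \<open>d > 0\<close> by simp
  then have "((\<lambda>u. integral {0..t} ?h + integral {t..u} ?h) has_vector_derivative ?h t)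
      (at t within {t..t+d})"
    by (auto intro!: derivative_eq_intros)
  then have "((\<lambda>u. integral {0..u} ?h) has_vector_derivative ?h t) (at t within {t..t+d})"
  proof (rule has_vector_derivative_transform_within[where d=1])
    show "integral {0..t} ?h + integral {t..u} ?h = integral {0..u} ?h" if "u \<in> {t..t+d}" for u
      using that \<open>t \<ge> 0\<close>
      by (intro Henstock_Kurzweil_Integration.integral_combine integrable_subinterval_real[OF int]) auto
  qed (use \<open>d > 0\<close> in auto)
  then show ?thesis
    using at_within_Icc_at_right[of t "t + d"] \<open>d > 0\<close>
    by (simp add: has_real_derivative_iff_has_vector_derivative)
qed

lemma switched_integral_has_right_derivative:
  assumes "switching_signal \<sigma>" "\<And>p T. T \<ge> 0 \<Longrightarrow> continuous_on {0..T} (G p)" "t \<ge> 0"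
  shows "(switched_integral \<sigma> G has_real_derivative G (\<sigma> t) t) (at t within {t<..})"
proof -
  have "(switched_integral \<sigma> G has_real_derivative (\<Sum>p\<in>UNIV. G p t * (if \<sigma> t = p then 1 else 0)))
      (at t within {t<..})"
    unfolding switched_integral_def[abs_def] using assms
    by (intro DERIV_sum integral_mode_has_right_derivative)
  moreover have "(\<Sum>p\<in>UNIV. G p t * (if \<sigma> t = p then 1 else 0)) = G (\<sigma> t) t"
    by (simp add: if_distrib cong: if_cong)
  ultimately show ?thesis
    by simp
qed

lemma continuous_on_switched_integral:
  assumes "switching_signal \<sigma>" "\<And>p. continuous_on {0..t} (G p)" "t \<ge> 0"
  shows "continuous_on {0..t} (switched_integral \<sigma> G)"
  unfolding switched_integral_def[abs_def] using assms
  by (intro continuous_on_sum indefinite_integral_continuous_1 integrable_on_mode)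

section \<open>Growth of the distance between trajectories\<close>

lemma sum_matrix_vector_mult: "(\<Sum>k\<in>A. M k) *v z = (\<Sum>k\<in>A. M k *v z)"
  by (induction A rule: infinite_finite_induct) (auto simp: matrix_vector_mult_add_rdistrib)

lemma matrix_blinfun_mult_vector:
  fixes X :: "(real^'n) \<Rightarrow>\<^sub>L (real^'m)"
  shows "matrix (blinfun_apply X) *v z = blinfun_apply X z"
proof -
  have "Vector_Spaces.linear (*s) (*s) (blinfun_apply X)"
    unfolding linear_matrix_vector_mul_eq by (rule bounded_linear.linear[OF blinfun.bounded_linear_right])
  then show ?thesis
    by (simp add: matrix_works)
qed

lemma jacobian_eq_matrix:
  "(g has_derivative blinfun_apply X) (at v) \<Longrightarrow> jacobian g v = matrix (blinfun_apply X)"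
  unfolding jacobian_def by (simp add: frechet_derivative_at[symmetric])

lemma segment_grid_point:
  "k \<le> n \<Longrightarrow> a + (real k / real n) *\<^sub>R (b - a) \<in> closed_segment a b"
  unfolding in_segment
  by (rule exI[of _ "real k / real n"]) (auto simp: algebra_simps divide_le_eq_1)

lemma linearization_error_segment:
  assumes "\<And>x. x \<in> closed_segment u w \<Longrightarrow> (g has_derivative blinfun_apply (g' x)) (at x)"
    and "\<And>x. x \<in> closed_segment u w \<Longrightarrow> norm (g' x - g' u) \<le> \<epsilon>"
  shows "norm (g w - g u - blinfun_apply (g' u) (w - u)) \<le> norm (w - u) * \<epsilon>"
proof (rule differentiable_bound_linearization[where S="closed_segment u w"])
  show "u + t *\<^sub>R (w - u) \<in> closed_segment u w" if "t \<in> {0..1}" for t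
    unfolding in_segment using that by (intro exI[of _ t]) (auto simp: algebra_simps)
  show "(g has_derivative blinfun_apply (g' x)) (at x within closed_segment u w)"
    if "x \<in> closed_segment u w" for x
    using assms(1)[OF that] by (rule has_derivative_at_withinI)
  show "onorm (blinfun_apply (g' x) - blinfun_apply (g' u)) \<le> \<epsilon>" if "x \<in> closed_segment u w" for x
    using assms(2)[OF that] by (simp add: norm_blinfun.rep_eq minus_blinfun.rep_eq fun_diff_def)
qed simp

lemma grid_increment_sub_mean_jacobian:
  fixes a b :: "real^'n"
  assumes g': "\<And>x. (g has_derivative blinfun_apply (g' x)) (at x)" and "n > 0"
  defines "v \<equiv> \<lambda>k. a + (real k / real n) *\<^sub>R (b - a)"
  shows "g b - g a - ((1 / real n) *\<^sub>R (\<Sum>k<n. jacobian g (v k))) *v (b - a)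
    = (\<Sum>k<n. g (v (Suc k)) - g (v k) - blinfun_apply (g' (v k)) (v (Suc k) - v k))"
proof -
  have step: "v (Suc k) - v k = (1 / real n) *\<^sub>R (b - a)" for k
    unfolding v_def by (simp add: scaleR_diff_left[symmetric] diff_divide_distrib[symmetric])
  have "g b - g a = (\<Sum>k<n. g (v (Suc k)) - g (v k))"
    using sum_lessThan_telescope[of "\<lambda>k. g (v k)" n] \<open>n > 0\<close> unfolding v_def by simp
  moreover have "((1 / real n) *\<^sub>R (\<Sum>k<n. jacobian g (v k))) *v (b - a)
      = (\<Sum>k<n. blinfun_apply (g' (v k)) (v (Suc k) - v k))"
    by (simp add: scaleR_matrix_vector_assoc[symmetric] sum_matrix_vector_mult
        jacobian_eq_matrix[OF g'] matrix_blinfun_mult_vector step scaleR_sum_right blinfun.scaleR_right)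
  ultimately show ?thesis
    by (simp add: sum_subtractf)
qed

lemma mean_jacobian_approx:
  assumes "continuously_differentiable g" "\<epsilon> > 0"
  obtains n where "n > 0"
    "norm (g b - g a - ((1 / real n) *\<^sub>R (\<Sum>k<n. jacobian g (a + (real k / real n) *\<^sub>R (b - a))))
      *v (b - a)) \<le> \<epsilon> * norm (b - a)"
proof -
  obtain g' where g': "\<And>x. (g has_derivative blinfun_apply (g' x)) (at x)" "continuous_on UNIV g'"
    using assms(1) unfolding continuously_differentiable_def by blast
  have "uniformly_continuous_on (closed_segment a b) g'"
    by (intro compact_uniformly_continuous continuous_on_subset[OF g'(2)]) auto
  then obtain \<delta> where "\<delta> > 0" and \<delta>: "\<And>v w. v \<in> closed_segment a b \<Longrightarrow> w \<in> closed_segment a b \<Longrightarrow>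
      dist w v < \<delta> \<Longrightarrow> dist (g' w) (g' v) < \<epsilon>"
    using assms(2) unfolding uniformly_continuous_on_def by metis
  obtain n :: nat where "norm (b - a) / \<delta> < real n"
    using reals_Archimedean2 by blast
  moreover have "0 \<le> norm (b - a) / \<delta>"
    using \<open>\<delta> > 0\<close> by simp
  ultimately have "n > 0" "norm (b - a) / \<delta> < real n"
    by linarith+
  then have "norm (b - a) / real n < \<delta>"
    using \<open>\<delta> > 0\<close> by (simp add: field_simps)
  define v where "v k = a + (real k / real n) *\<^sub>R (b - a)" for k
  have step: "v (Suc k) - v k = (1 / real n) *\<^sub>R (b - a)" for k
    unfolding v_def by (simp add: scaleR_diff_left[symmetric] diff_divide_distrib[symmetric])
  have piece: "norm (g (v (Suc k)) - g (v k) - blinfun_apply (g' (v k)) (v (Suc k) - v k))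
      \<le> norm (v (Suc k) - v k) * \<epsilon>" if "k < n" for k
  proof (rule linearization_error_segment[OF g'(1)])
    fix x assume x: "x \<in> closed_segment (v k) (v (Suc k))"
    have "v k \<in> closed_segment a b" "v (Suc k) \<in> closed_segment a b"
      unfolding v_def using that
      by (intro segment_grid_point; simp)+
    note ends = this
    then have "x \<in> closed_segment a b"
      using x convex_contains_segment[of "closed_segment a b"] by blast
    moreover have "dist x (v k) \<le> norm (v (Suc k) - v k)"
      using dist_in_closed_segment[OF x] by (simp add: dist_norm norm_minus_commute)
    then have "dist x (v k) < \<delta>"
      using \<open>norm (b - a) / real n < \<delta>\<close> by (simp add: step)
    ultimately show "norm (g' x - g' (v k)) \<le> \<epsilon>"
      using \<delta>[of "v k" x] ends by (simp add: dist_norm)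
  qed
  have "g b - g a - ((1 / real n) *\<^sub>R (\<Sum>k<n. jacobian g (v k))) *v (b - a)
      = (\<Sum>k<n. g (v (Suc k)) - g (v k) - blinfun_apply (g' (v k)) (v (Suc k) - v k))"
    unfolding v_def using g'(1) \<open>n > 0\<close> by (rule grid_increment_sub_mean_jacobian)
  also have "norm \<dots> \<le> (\<Sum>k<n. norm (v (Suc k) - v k) * \<epsilon>)"
    by (rule order_trans[OF norm_sum sum_mono]) (simp add: piece)
  also have "\<dots> = \<epsilon> * norm (b - a)"
    using \<open>n > 0\<close> by (simp add: step)
  finally show ?thesis
    using that \<open>n > 0\<close> unfolding v_def by blast
qed

context vector_norm
begin

lemma lipschitz_matrix_measure_blinfun:
  "\<exists>L. L-lipschitz_on UNIV (\<lambda>X. matrix_measure N (c *\<^sub>R matrix (blinfun_apply X)))"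
proof -
  obtain C where "C > 0"
    and C: "\<And>A X. \<forall>z. A *v z = blinfun_apply X z \<Longrightarrow> induced_norm N A \<le> C * norm X"
    using induced_norm_le_blinfun by blast
  have diff: "induced_norm N (c *\<^sub>R matrix (blinfun_apply X) - c *\<^sub>R matrix (blinfun_apply Y))
      \<le> C * \<bar>c\<bar> * dist X Y" for X Y
  proof -
    have "\<forall>z. (c *\<^sub>R matrix (blinfun_apply X) - c *\<^sub>R matrix (blinfun_apply Y)) *v z
        = blinfun_apply (c *\<^sub>R (X - Y)) z"
      by (simp add: matrix_vector_mult_diff_rdistrib scaleR_matrix_vector_assoc[symmetric]
          matrix_blinfun_mult_vector blinfun.diff_left blinfun.scaleR_left scaleR_diff_right)
    from C[OF this] show ?thesis
      by (simp add: dist_norm mult.assoc)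
  qed
  have "(C * \<bar>c\<bar>)-lipschitz_on UNIV (\<lambda>X. matrix_measure N (c *\<^sub>R matrix (blinfun_apply X)))"
  proof (rule lipschitz_onI)
    fix X Y :: "(real^'n) \<Rightarrow>\<^sub>L (real^'n)"
    show "dist (matrix_measure N (c *\<^sub>R matrix (blinfun_apply X)))
        (matrix_measure N (c *\<^sub>R matrix (blinfun_apply Y))) \<le> C * \<bar>c\<bar> * dist X Y"
      using matrix_measure_le_add[of "c *\<^sub>R matrix (blinfun_apply X)" "c *\<^sub>R matrix (blinfun_apply Y)"]
        matrix_measure_le_add[of "c *\<^sub>R matrix (blinfun_apply Y)" "c *\<^sub>R matrix (blinfun_apply X)"]
        diff[of X Y] diff[of Y X] by (simp add: dist_real_def dist_commute abs_le_iff)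
  qed (use \<open>C > 0\<close> in simp)
  then show ?thesis
    by blast
qed

lemma continuous_on_matrix_measure_jacobian:
  assumes "continuously_differentiable g"
  shows "continuous_on UNIV (\<lambda>v. matrix_measure N (c *\<^sub>R jacobian g v))"
proof -
  obtain g' where g': "\<And>x. (g has_derivative blinfun_apply (g' x)) (at x)" "continuous_on UNIV g'"
    using assms unfolding continuously_differentiable_def by blast
  obtain L where "L-lipschitz_on UNIV (\<lambda>X. matrix_measure N (c *\<^sub>R matrix (blinfun_apply X)))"
    using lipschitz_matrix_measure_blinfun by blast
  then have "continuous_on UNIV (\<lambda>v. matrix_measure N (c *\<^sub>R matrix (blinfun_apply (g' v))))"
    by (intro continuous_on_compose2[OF lipschitz_on_continuous_on g'(2)]) auto
  then show ?thesis
    by (simp add: jacobian_eq_matrix[OF g'(1)])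
qed

lemma exists_mean_jacobian:
  assumes g: "continuously_differentiable g" and "\<epsilon> > 0"
    and M: "\<And>v. v \<in> closed_segment a b \<Longrightarrow> matrix_measure N (c *\<^sub>R jacobian g v) \<le> M"
  obtains A where "matrix_measure N (c *\<^sub>R A) \<le> M" "N (g b - g a - A *v (b - a)) \<le> \<epsilon>"
proof -
  obtain C where "C > 0" and C: "\<And>x. N x \<le> C * norm x"
    using le_norm by blast
  define \<epsilon>' where "\<epsilon>' = \<epsilon> / (C * (norm (b - a) + 1))"
  have "\<epsilon>' > 0"
    unfolding \<epsilon>'_def using \<open>\<epsilon> > 0\<close> \<open>C > 0\<close> by (simp add: add_nonneg_pos)
  then obtain n where "n > 0" and n: "norm (g b - g a - ((1 / real n) *\<^sub>R
      (\<Sum>k<n. jacobian g (a + (real k / real n) *\<^sub>R (b - a)))) *v (b - a)) \<le> \<epsilon>' * norm (b - a)"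
    by (rule mean_jacobian_approx[OF g])
  define J where "J k = jacobian g (a + (real k / real n) *\<^sub>R (b - a))" for k
  have "matrix_measure N (c *\<^sub>R ((1 / real n) *\<^sub>R (\<Sum>k<n. J k)))
      = matrix_measure N ((1 / card {..<n}) *\<^sub>R (\<Sum>k<n. c *\<^sub>R J k))"
    by (simp add: scaleR_sum_right)
  also have "\<dots> \<le> (1 / card {..<n}) * (\<Sum>k<n. matrix_measure N (c *\<^sub>R J k))"
    using \<open>n > 0\<close> by (intro matrix_measure_mean_le) auto
  also have "\<dots> \<le> (1 / card {..<n}) * (\<Sum>k<n. M)"
    unfolding J_def by (intro mult_left_mono sum_mono M segment_grid_point) auto
  also have "\<dots> = M"
    using \<open>n > 0\<close> by simp
  finally have "matrix_measure N (c *\<^sub>R ((1 / real n) *\<^sub>R (\<Sum>k<n. J k))) \<le> M" .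
  moreover have "N (g b - g a - ((1 / real n) *\<^sub>R (\<Sum>k<n. J k)) *v (b - a)) \<le> C * (\<epsilon>' * norm (b - a))"
    using C n \<open>C > 0\<close> unfolding J_def by (meson mult_left_mono less_imp_le order_trans)
  moreover have "C * (\<epsilon>' * norm (b - a)) = \<epsilon> * (norm (b - a) / (norm (b - a) + 1))"
  proof -
    have "norm (b - a) + 1 > 0"
      by (simp add: add_nonneg_pos)
    then show ?thesis
      unfolding \<epsilon>'_def using \<open>C > 0\<close> by (simp add: divide_simps)
  qed
  moreover have "\<epsilon> * (norm (b - a) / (norm (b - a) + 1)) \<le> \<epsilon>"
    using \<open>\<epsilon> > 0\<close> mult_left_mono[of "norm (b - a) / (norm (b - a) + 1)" 1 \<epsilon>]
    by (simp add: add_nonneg_pos del: times_divide_eq_right)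
  ultimately show ?thesis
    using that by fastforce
qed

lemma segment_growth_le:
  assumes g: "continuously_differentiable g" and "\<epsilon> > 0"
    and M: "\<And>v. v \<in> closed_segment a b \<Longrightarrow> matrix_measure N (jacobian g v) \<le> M"
  shows "eventually (\<lambda>h. N ((b - a) + h *\<^sub>R (g b - g a)) \<le> N (b - a) + h * (M * N (b - a) + \<epsilon>))
    (at_right 0)"
proof -
  obtain A where A: "matrix_measure N A \<le> M" "N (g b - g a - A *v (b - a)) \<le> \<epsilon> / 2"
    using exists_mean_jacobian[OF g half_gt_zero[OF \<open>\<epsilon> > 0\<close>], of a b 1 M] M by auto
  show ?thesis
    using eventually_norm_step_le[OF half_gt_zero[OF \<open>\<epsilon> > 0\<close>], of "b - a" A]
      eventually_at_right_less[of 0]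
  proof eventually_elim
    case (elim h)
    let ?x = "b - a" and ?d = "g b - g a"
    have "N (?x + h *\<^sub>R ?d) \<le> N (?x + h *\<^sub>R (A *v ?x)) + N (h *\<^sub>R (?d - A *v ?x))"
      using triangle[of "?x + h *\<^sub>R (A *v ?x)" "h *\<^sub>R (?d - A *v ?x)"] by (simp add: algebra_simps)
    also have "\<dots> \<le> N ?x + h * (matrix_measure N A * N ?x + \<epsilon> / 2) + h * (\<epsilon> / 2)"
      using elim A(2) by (intro add_mono) (auto simp: homogeneous mult_left_mono)
    also have "\<dots> \<le> N ?x + h * (M * N ?x + \<epsilon>)"
      using mult_right_mono[OF A(1) nonneg[of ?x]] elim(2) by (simp add: algebra_simps mult_left_mono)
    finally show ?case .
  qed
qed

lemma segment_growth_ge: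
  assumes g: "continuously_differentiable g" and "\<epsilon> > 0"
    and M: "\<And>v. v \<in> closed_segment a b \<Longrightarrow> matrix_measure N (- jacobian g v) \<le> M"
  shows "eventually (\<lambda>h. N (b - a) - h * (M * N (b - a) + \<epsilon>) \<le> N ((b - a) + h *\<^sub>R (g b - g a)))
    (at_right 0)"
proof -
  obtain A where A: "matrix_measure N (- A) \<le> M" "N (g b - g a - A *v (b - a)) \<le> \<epsilon> / 2"
    using exists_mean_jacobian[OF g half_gt_zero[OF \<open>\<epsilon> > 0\<close>], of a b "-1" M] M by auto
  show ?thesis
    using eventually_norm_step_ge[OF half_gt_zero[OF \<open>\<epsilon> > 0\<close>], of "b - a" A]
      eventually_at_right_less[of 0]
  proof eventually_elim
    case (elim h)
    let ?x = "b - a" and ?d = "g b - g a"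
    have "N ?x - h * (M * N ?x + \<epsilon>) \<le> N ?x - h * (matrix_measure N (- A) * N ?x + \<epsilon> / 2) - h * (\<epsilon> / 2)"
      using mult_right_mono[OF A(1) nonneg[of ?x]] elim(2) by (simp add: algebra_simps mult_left_mono)
    also have "\<dots> \<le> N (?x + h *\<^sub>R (A *v ?x)) - N (h *\<^sub>R (?d - A *v ?x))"
      using elim A(2) by (intro diff_mono) (auto simp: homogeneous mult_left_mono)
    also have "\<dots> \<le> N (?x + h *\<^sub>R ?d)"
      using triangle_diff[of "?x + h *\<^sub>R ?d" "h *\<^sub>R (?d - A *v ?x)"] by (simp add: algebra_simps)
    finally show ?case .
  qed
qed

end

locale normed_switched_system = switched_system f \<sigma> + vector_norm N
  for f :: "'p::finite \<Rightarrow> real^'n \<Rightarrow> real^'n" and \<sigma> :: "real \<Rightarrow> 'p" and N :: "real^'n \<Rightarrow> real"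
begin

lemma flow_diff_right_approx:
  assumes "s \<ge> 0" "\<epsilon> > 0"
  shows "eventually (\<lambda>r. \<bar>N (flow r y - flow r x) - N ((flow s y - flow s x) +
    (r - s) *\<^sub>R (f (\<sigma> s) (flow s y) - f (\<sigma> s) (flow s x)))\<bar> \<le> (r - s) * \<epsilon>) (at_right s)"
proof -
  obtain C where "C > 0" and C: "\<And>z. N z \<le> C * norm z"
    using le_norm by blast
  have "((\<lambda>r. flow r y - flow r x) has_vector_derivative f (\<sigma> s) (flow s y) - f (\<sigma> s) (flow s x))
      (at_right s)"
    using assms(1) by (intro derivative_intros flow_has_right_derivative)
  from has_vector_derivative_right_approx[OF this divide_pos_pos[OF \<open>\<epsilon> > 0\<close> \<open>C > 0\<close>]]
  show ?thesis
  proof eventually_elim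
    case (elim r)
    let ?a = "flow r y - flow r x"
    let ?b = "(flow s y - flow s x) + (r - s) *\<^sub>R (f (\<sigma> s) (flow s y) - f (\<sigma> s) (flow s x))"
    have "\<bar>N ?a - N ?b\<bar> \<le> C * norm (?a - ?b)"
      using abs_diff_le[of ?a ?b] C[of "?a - ?b"] by linarith
    also have "\<dots> \<le> C * ((r - s) * (\<epsilon> / C))"
      using elim \<open>C > 0\<close> by (intro mult_left_mono) auto
    finally show ?case
      using \<open>C > 0\<close> by simp
  qed
qed

lemma flow_dist_right_growth_le:
  assumes "s \<ge> 0" "\<epsilon> > 0"
    and M: "\<And>v. v \<in> closed_segment (flow s x) (flow s y) \<Longrightarrow> matrix_measure N (jacobian (f (\<sigma> s)) v) \<le> M"
  shows "eventually (\<lambda>r. N (flow r y - flow r x)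
    \<le> N (flow s y - flow s x) + (r - s) * (M * N (flow s y - flow s x) + \<epsilon>)) (at_right s)"
proof -
  have "eventually (\<lambda>h. N ((flow s y - flow s x) + h *\<^sub>R (f (\<sigma> s) (flow s y) - f (\<sigma> s) (flow s x)))
      \<le> N (flow s y - flow s x) + h * (M * N (flow s y - flow s x) + \<epsilon> / 2)) (at_right 0)"
    using \<open>\<epsilon> > 0\<close> by (intro segment_growth_le C1 M) auto
  then have "eventually (\<lambda>r. N ((flow s y - flow s x) + (r - s) *\<^sub>R (f (\<sigma> s) (flow s y) - f (\<sigma> s) (flow s x)))
      \<le> N (flow s y - flow s x) + (r - s) * (M * N (flow s y - flow s x) + \<epsilon> / 2)) (at_right s)"
    by (subst eventually_at_right_to_0) simp
  with flow_diff_right_approx[OF \<open>s \<ge> 0\<close> half_gt_zero[OF \<open>\<epsilon> > 0\<close>], of y x] show ?thesis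
  proof eventually_elim
    case (elim r)
    have "(r - s) * (M * N (flow s y - flow s x) + \<epsilon>)
        = (r - s) * (M * N (flow s y - flow s x) + \<epsilon> / 2) + (r - s) * (\<epsilon> / 2)"
      by (simp add: algebra_simps)
    with elim show ?case
      unfolding abs_le_iff by linarith
  qed
qed

lemma flow_dist_right_growth_ge:
  assumes "s \<ge> 0" "\<epsilon> > 0"
    and M: "\<And>v. v \<in> closed_segment (flow s x) (flow s y) \<Longrightarrow> matrix_measure N (- jacobian (f (\<sigma> s)) v) \<le> M"
  shows "eventually (\<lambda>r. N (flow s y - flow s x) - (r - s) * (M * N (flow s y - flow s x) + \<epsilon>)
    \<le> N (flow r y - flow r x)) (at_right s)"
proof -
  have "eventually (\<lambda>h. N (flow s y - flow s x) - h * (M * N (flow s y - flow s x) + \<epsilon> / 2)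
      \<le> N ((flow s y - flow s x) + h *\<^sub>R (f (\<sigma> s) (flow s y) - f (\<sigma> s) (flow s x)))) (at_right 0)"
    using \<open>\<epsilon> > 0\<close> by (intro segment_growth_ge C1 M) auto
  then have "eventually (\<lambda>r. N (flow s y - flow s x) - (r - s) * (M * N (flow s y - flow s x) + \<epsilon> / 2)
      \<le> N ((flow s y - flow s x) + (r - s) *\<^sub>R (f (\<sigma> s) (flow s y) - f (\<sigma> s) (flow s x)))) (at_right s)"
    by (subst eventually_at_right_to_0) simp
  with flow_diff_right_approx[OF \<open>s \<ge> 0\<close> half_gt_zero[OF \<open>\<epsilon> > 0\<close>], of y x] show ?thesis
  proof eventually_elim
    case (elim r)
    have "(r - s) * (M * N (flow s y - flow s x) + \<epsilon>)
        = (r - s) * (M * N (flow s y - flow s x) + \<epsilon> / 2) + (r - s) * (\<epsilon> / 2)"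
      by (simp add: algebra_simps)
    with elim show ?case
      unfolding abs_le_iff by linarith
  qed
qed

lemma flow_dist_le_exp:
  assumes "t \<ge> 0" and \<eta>: "continuous_on {0..t} \<eta>"
    "\<And>s. s \<in> {0..<t} \<Longrightarrow> (\<eta> has_real_derivative k s) (at s within {s<..})"
    and k: "\<And>s v. s \<in> {0..<t} \<Longrightarrow> v \<in> closed_segment (flow s x) (flow s y) \<Longrightarrow>
      matrix_measure N (jacobian (f (\<sigma> s)) v) \<le> k s"
  shows "N (flow t y - flow t x) \<le> exp (\<eta> t - \<eta> 0) * N (y - x)"
proof -
  define u where "u r = N (flow r y - flow r x)" for r
  have "u t * exp (- \<eta> t) \<le> u 0 * exp (- \<eta> 0)"
  proof (rule gronwall_right_dini[OF \<open>t \<ge> 0\<close> _ \<eta>(1) zero_less_one _ \<eta>(2)])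
    show "continuous_on {0..t} u"
      unfolding u_def
      by (intro continuous_on_compose2[OF continuous_on_UNIV] continuous_intros
          continuous_on_subset[OF continuous_on_flow]) auto
    show "eventually (\<lambda>r. u r \<le> u s + (r - s) * (k s * u s + \<epsilon>)) (at_right s)"
      if "s \<in> {0..<t}" "\<epsilon> > 0" for s \<epsilon>
      unfolding u_def using that k by (intro flow_dist_right_growth_le) auto
  qed
  then show ?thesis
    unfolding u_def by (simp add: exp_minus exp_diff field_simps)
qed

lemma exp_le_flow_dist:
  assumes "t \<ge> 0" and \<eta>: "continuous_on {0..t} \<eta>"
    "\<And>s. s \<in> {0..<t} \<Longrightarrow> (\<eta> has_real_derivative k s) (at s within {s<..})"
    and k: "\<And>s v. s \<in> {0..<t} \<Longrightarrow> v \<in> closed_segment (flow s x) (flow s y) \<Longrightarrow>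
      matrix_measure N (- jacobian (f (\<sigma> s)) v) \<le> - k s"
  shows "exp (\<eta> t - \<eta> 0) * N (y - x) \<le> N (flow t y - flow t x)"
proof -
  define u where "u r = - N (flow r y - flow r x)" for r
  have "u t * exp (- \<eta> t) \<le> u 0 * exp (- \<eta> 0)"
  proof (rule gronwall_right_dini[OF \<open>t \<ge> 0\<close> _ \<eta>(1) zero_less_one _ \<eta>(2)])
    show "continuous_on {0..t} u"
      unfolding u_def
      by (intro continuous_on_compose2[OF continuous_on_UNIV] continuous_intros
          continuous_on_subset[OF continuous_on_flow]) auto
    show "eventually (\<lambda>r. u r \<le> u s + (r - s) * (k s * u s + \<epsilon>)) (at_right s)"
      if "s \<in> {0..<t}" "\<epsilon> > 0" for s \<epsilon>
      using flow_dist_right_growth_ge[of s \<epsilon> x y "- k s"] that k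
      unfolding u_def by (auto simp: algebra_simps)
  qed
  then show ?thesis
    unfolding u_def by (simp add: exp_minus exp_diff field_simps)
qed

lemma closed_segment_flow_subset_hull:
  "x \<in> K \<Longrightarrow> y \<in> K \<Longrightarrow> closed_segment (flow s x) (flow s y) \<subseteq> convex hull (flow s ` K)"
  by (intro closed_segment_subset_convex_hull hull_inc) auto

lemma flow_dist_le_eta_upper_alt:
  assumes "compact K" "x \<in> K" "y \<in> K" "t \<ge> 0"
  shows "N (flow t y - flow t x) \<le> exp (eta_upper_alt f \<sigma> K N t) * N (y - x)"
proof -
  define G where "G p s = (SUP v\<in>convex hull (flow s ` K). matrix_measure N (jacobian (f p) v))" for p s
  have G: "continuous_on {0..T} (G p)" if "T \<ge> 0" for p T
    unfolding G_def using assms(1,2) that continuous_on_matrix_measure_jacobian[OF C1, of 1 p]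
    by (intro continuous_on_SUP_hull_flow) auto
  have "N (flow t y - flow t x) \<le> exp (switched_integral \<sigma> G t - switched_integral \<sigma> G 0) * N (y - x)"
  proof (rule flow_dist_le_exp[OF \<open>t \<ge> 0\<close>])
    show "continuous_on {0..t} (switched_integral \<sigma> G)"
      using G \<open>t \<ge> 0\<close> by (intro continuous_on_switched_integral switching)
    show "(switched_integral \<sigma> G has_real_derivative G (\<sigma> s) s) (at s within {s<..})" if "s \<in> {0..<t}" for s
      using G that by (intro switched_integral_has_right_derivative switching) auto
    fix s v assume "s \<in> {0..<t}" "v \<in> closed_segment (flow s x) (flow s y)"
    moreover from this(2) have "v \<in> convex hull (flow s ` K)"
      using closed_segment_flow_subset_hull[OF assms(2,3)] by blast
    ultimately show "matrix_measure N (jacobian (f (\<sigma> s)) v) \<le> G (\<sigma> s) s"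
      unfolding G_def using assms(1) continuous_on_matrix_measure_jacobian[OF C1, of 1]
      by (intro cSUP_upper bdd_above_SUP_hull_flow) auto
  qed
  moreover have "eta_upper_alt f \<sigma> K N = switched_integral \<sigma> G"
    unfolding eta_upper_alt_def switched_integral_def G_def ..
  ultimately show ?thesis
    by (simp add: switched_integral_def)
qed

lemma eta_lower_le_flow_dist:
  assumes "compact K" "x \<in> K" "y \<in> K" "t \<ge> 0"
  shows "exp (eta_lower f \<sigma> K N t) * N (y - x) \<le> N (flow t y - flow t x)"
proof -
  define G where "G p s = (SUP v\<in>convex hull (flow s ` K). matrix_measure N (- jacobian (f p) v))" for p s
  have G: "continuous_on {0..T} (\<lambda>s. - G p s)" if "T \<ge> 0" for p T
    unfolding G_def using assms(1,2) that continuous_on_matrix_measure_jacobian[OF C1, of "-1" p]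
    by (intro continuous_on_minus continuous_on_SUP_hull_flow) auto
  have "exp (switched_integral \<sigma> (\<lambda>p s. - G p s) t - switched_integral \<sigma> (\<lambda>p s. - G p s) 0) * N (y - x)
      \<le> N (flow t y - flow t x)"
  proof (rule exp_le_flow_dist[OF \<open>t \<ge> 0\<close>])
    show "continuous_on {0..t} (switched_integral \<sigma> (\<lambda>p s. - G p s))"
      using G \<open>t \<ge> 0\<close> by (intro continuous_on_switched_integral switching)
    show "(switched_integral \<sigma> (\<lambda>p s. - G p s) has_real_derivative - G (\<sigma> s) s) (at s within {s<..})"
      if "s \<in> {0..<t}" for s
      using G that by (intro switched_integral_has_right_derivative[where G="\<lambda>p s. - G p s", simplified]
          switching) auto
    fix s v assume "s \<in> {0..<t}" "v \<in> closed_segment (flow s x) (flow s y)"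
    moreover from this(2) have "v \<in> convex hull (flow s ` K)"
      using closed_segment_flow_subset_hull[OF assms(2,3)] by blast
    ultimately show "matrix_measure N (- jacobian (f (\<sigma> s)) v) \<le> - (- G (\<sigma> s) s)"
      unfolding G_def minus_minus using assms(1) continuous_on_matrix_measure_jacobian[OF C1, of "-1"]
      by (intro cSUP_upper bdd_above_SUP_hull_flow) auto
  qed
  moreover have "eta_lower f \<sigma> K N = switched_integral \<sigma> (\<lambda>p s. - G p s)"
    unfolding eta_lower_def switched_integral_def G_def by (simp add: Inf_real_def image_image)
  ultimately show ?thesis
    by (simp add: switched_integral_def)
qed

end

theorem lemma5:
  fixes f :: "'p::finite \<Rightarrow> real^'n \<Rightarrow> real^'n"
    and \<sigma> :: "real \<Rightarrow> 'p"
    and K :: "(real^'n) set"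
    and N :: "real^'n \<Rightarrow> real"
  assumes C1: "\<And>p. continuously_differentiable (f p)"
    and fc: "\<And>p. forward_complete (f p)"
    and sw: "switching_signal \<sigma>"
    and K: "compact K" "interior K \<noteq> {}"
    and N: "is_norm N"
  shows "\<forall>x\<in>K. \<forall>xb\<in>K. \<forall>t\<ge>0.
     exp (eta_lower f \<sigma> K N t) * N (xb - x)
       \<le> N (switched_flow f \<sigma> t xb - switched_flow f \<sigma> t x)
     \<and> N (switched_flow f \<sigma> t xb - switched_flow f \<sigma> t x)
       \<le> exp (eta_upper_alt f \<sigma> K N t) * N (xb - x)"
proof -
  interpret normed_switched_system f \<sigma> N
    using C1 fc sw N by unfold_locales
  show ?thesis
    using eta_lower_le_flow_dist flow_dist_le_eta_upper_alt K(1) by blast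
qed

end
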